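(* Let $\mathcal{H}_1,\mathcal{H}_2$ be separable Hilbert spaces with orthonormal bases $\{e_{1,n}\}_{n>0}$, $\{e_{2,n}\}_{n>0}$. For $j\in\{1,2\}$, let $\{f_{j,1,n}\}_{n>0},\dots,\{f_{j,r,n}\}_{n>0}$ be linearly independent sequences in $\mathcal{H}_j$, and let $\mathcal{F}=\{f_{m,n}\}_{m,n>0}$ with $f_{m,n}=\sum_{k=1}^r f_{1,k,m}\otimes f_{2,k,n}$ in $\mathcal{H}_1\otimes\mathcal{H}_2$. Let $F_{j,k}$ be the operator associated to $\{e_{j,n}\}$ and $\{f_{j,k,n}\}$. (i) $\mathcal{F}$ is a Bessel sequence in $\mathcal{H}_1\otimes\mathcal{H}_2$ if and only if $\{f_{j,k,n}\}_{n>0}$ is a Bessel sequence in $\mathcal{H}_j$ for each $(j,k)\in\{1,2\}\times\{1,\dots,r\}$. (ii) If $\mathcal{F}$ is a frame, then (each $F_{j,k}$ is bounded and) there exist operators $L_{j,k}\in\mathcal{B}(\mathcal{H}_j)$ with $\sum_{k=1}^r L_{j,k}F_{j,k}=I_{\mathcal{H}_j}$ for each $j\in\{1,2\}$; moreover, for each $j=1,2$ the concatenated sequence $\{f_{j,k,m}\}_{1\le k\le r,\,m>0}$ is a frame in $\mathcal{H}_j$. (iii) If $\mathcal{F}$ is a Riesz basis of $\mathcal{H}_1\otimes\mathcal{H}_2$, then in addition to the conclusion of (ii) there exist operators $R_{j,k}\in\mathcal{B}(\mathcal{H}_j)$ with $\sum_{k=1}^r F_{j,k}R_{j,k}=I_{\mathcal{H}_j}$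 for each $j\in\{1,2\}$.
   Context: Given an orthonormal basis $\{e_n\}$ of $\mathcal{H}$ and a sequence $\{f_n\}$ in $\mathcal{H}$, the associated operator is $F(f)=\sum_n\langle f,f_n\rangle e_n$ on its domain $\{f: \sum_n|\langle f,f_n\rangle|^2<\infty\}$; it is bounded exactly when $\{f_n\}$ is a Bessel sequence. Bessel sequence: $\sum_n|\langle f,f_n\rangle|^2\le B\|f\|^2$ for all $f$; frame: additionally $A\|f\|^2\le\sum_n|\langle f,f_n\rangle|^2$ with $A>0$; Riesz basis: a frame which is the image of an orthonormal basis under a bounded invertible operator. Linear independence of sequences is meant in the vector space of sequences in $\mathcal{H}_j$. *)

theory Defs
  imports "HOL-Analysis.Analysis"
begin

text \<open>Concrete model: a separable infinite-dimensional (complex) Hilbert space with a fixed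
  orthonormal basis is identified with l2 over an index type, the basis being the standard one.
  H_j = l2(nat), H_1 (x) H_2 = l2(nat \<times> nat) with (x \<otimes> y)(i,i') = x i * y i'.\<close>

definition is_l2 :: "('i \<Rightarrow> complex) \<Rightarrow> bool" where
  "is_l2 x \<longleftrightarrow> (\<lambda>i. (cmod (x i))^2) summable_on UNIV"

definition l2_normsq :: "('i \<Rightarrow> complex) \<Rightarrow> real" where
  "l2_normsq x = infsum (\<lambda>i. (cmod (x i))^2) UNIV"

definition l2_inner :: "('i \<Rightarrow> complex) \<Rightarrow> ('i \<Rightarrow> complex) \<Rightarrow> complex" where
  "l2_inner x y = infsum (\<lambda>i. x i * cnj (y i)) UNIV"

definition bessel_on :: "'j set \<Rightarrow> ('j \<Rightarrow> 'i \<Rightarrow> complex) \<Rightarrow> bool" where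
  "bessel_on J f \<longleftrightarrow> (\<forall>j\<in>J. is_l2 (f j)) \<and>
     (\<exists>B. \<forall>x. is_l2 x \<longrightarrow>
        (\<lambda>j. (cmod (l2_inner x (f j)))^2) summable_on J \<and>
        infsum (\<lambda>j. (cmod (l2_inner x (f j)))^2) J \<le> B * l2_normsq x)"

definition frame_on :: "'j set \<Rightarrow> ('j \<Rightarrow> 'i \<Rightarrow> complex) \<Rightarrow> bool" where
  "frame_on J f \<longleftrightarrow> bessel_on J f \<and>
     (\<exists>A>0. \<forall>x. is_l2 x \<longrightarrow> A * l2_normsq x \<le> infsum (\<lambda>j. (cmod (l2_inner x (f j)))^2) J)"

text \<open>Bounded linear operators on l2 (only their action on l2 matters).\<close>
definition bounded_op :: "(('i \<Rightarrow> complex) \<Rightarrow> ('k \<Rightarrow> complex)) \<Rightarrow> bool" where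
  "bounded_op T \<longleftrightarrow> (\<forall>x. is_l2 x \<longrightarrow> is_l2 (T x)) \<and>
     (\<forall>x y a b. is_l2 x \<longrightarrow> is_l2 y \<longrightarrow>
        T (\<lambda>i. a * x i + b * y i) = (\<lambda>i. a * T x i + b * T y i)) \<and>
     (\<exists>C. \<forall>x. is_l2 x \<longrightarrow> l2_normsq (T x) \<le> C * l2_normsq x)"

definition bounded_invertible_op :: "(('i \<Rightarrow> complex) \<Rightarrow> ('i \<Rightarrow> complex)) \<Rightarrow> bool" where
  "bounded_invertible_op T \<longleftrightarrow> bounded_op T \<and>
     (\<exists>S. bounded_op S \<and> (\<forall>x. is_l2 x \<longrightarrow> S (T x) = x \<and> T (S x) = x))"

definition orthonormal_basis_on :: "'j set \<Rightarrow> ('j \<Rightarrow> 'i \<Rightarrow> complex) \<Rightarrow> bool" where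
  "orthonormal_basis_on J u \<longleftrightarrow> (\<forall>j\<in>J. is_l2 (u j)) \<and>
     (\<forall>j\<in>J. \<forall>j'\<in>J. l2_inner (u j) (u j') = (if j = j' then 1 else 0)) \<and>
     (\<forall>x. is_l2 x \<longrightarrow> (\<forall>j\<in>J. l2_inner x (u j) = 0) \<longrightarrow> x = (\<lambda>i. 0))"

definition riesz_basis_on :: "'j set \<Rightarrow> ('j \<Rightarrow> 'i \<Rightarrow> complex) \<Rightarrow> bool" where
  "riesz_basis_on J f \<longleftrightarrow> frame_on J f \<and>
     (\<exists>u T. orthonormal_basis_on J u \<and> bounded_invertible_op T \<and> (\<forall>j\<in>J. f j = T (u j)))"

text \<open>Operator associated to the standard orthonormal basis and a sequence f:
  F x = \<Sum>n <x, f n> e_n, i.e. the coefficient sequence.\<close>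
definition assoc_op :: "(nat \<Rightarrow> 'i \<Rightarrow> complex) \<Rightarrow> ('i \<Rightarrow> complex) \<Rightarrow> (nat \<Rightarrow> complex)" where
  "assoc_op f x = (\<lambda>n. l2_inner x (f n))"

definition lin_indep_seqs :: "nat \<Rightarrow> (nat \<Rightarrow> nat \<Rightarrow> 'i \<Rightarrow> complex) \<Rightarrow> bool" where
  "lin_indep_seqs r f \<longleftrightarrow>
     (\<forall>c :: nat \<Rightarrow> complex. (\<forall>n i. (\<Sum>k<r. c k * f k n i) = 0) \<longrightarrow> (\<forall>k<r. c k = 0))"

definition tensor_seq :: "nat \<Rightarrow> (nat \<Rightarrow> nat \<Rightarrow> nat \<Rightarrow> complex) \<Rightarrow> (nat \<Rightarrow> nat \<Rightarrow> nat \<Rightarrow> complex)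
    \<Rightarrow> (nat \<times> nat) \<Rightarrow> (nat \<times> nat) \<Rightarrow> complex" where
  "tensor_seq r f1 f2 = (\<lambda>(m, n) (i, i'). \<Sum>k<r. f1 k m i * f2 k n i')"

definition left_inverse_property :: "nat \<Rightarrow> (nat \<Rightarrow> nat \<Rightarrow> nat \<Rightarrow> complex) \<Rightarrow> bool" where
  "left_inverse_property r f \<longleftrightarrow>
     (\<forall>k<r. bounded_op (assoc_op (f k))) \<and>
     (\<exists>L :: nat \<Rightarrow> (nat \<Rightarrow> complex) \<Rightarrow> (nat \<Rightarrow> complex).
        (\<forall>k<r. bounded_op (L k)) \<and>
        (\<forall>x. is_l2 x \<longrightarrow> (\<lambda>i. \<Sum>k<r. L k (assoc_op (f k) x) i) = x)) \<and>
     frame_on {(k, m). k < r} (\<lambda>(k, m). f k m)"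

definition right_inverse_property :: "nat \<Rightarrow> (nat \<Rightarrow> nat \<Rightarrow> nat \<Rightarrow> complex) \<Rightarrow> bool" where
  "right_inverse_property r f \<longleftrightarrow>
     (\<exists>R :: nat \<Rightarrow> (nat \<Rightarrow> complex) \<Rightarrow> (nat \<Rightarrow> complex).
        (\<forall>k<r. bounded_op (R k)) \<and>
        (\<forall>x. is_l2 x \<longrightarrow> (\<lambda>i. \<Sum>k<r. assoc_op (f k) (R k x) i) = x))"

end

(*
  The analysis coefficients of F at x (x) y are sum_k <x, f_{1,k,m}> <y, f_{2,k,n}>.

  (i) Tensoring two Bessel sequences gives a Bessel family, and a sum of r Bessel families is
  Bessel. Conversely, testing the Bessel inequality of F on x (x) y shows that
  n |-> sum_k conj <x, f_{1,k,m}> f_{2,k,n} is Bessel for all x and m; by linear independence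
  of the f_{1,k} these coefficient vectors span C^r, so every f_{2,k} is Bessel, and
  symmetrically every f_{1,k}.

  (ii) The lower frame bound of F, tested on x (x) e_0, makes the concatenation of the f_{1,k}
  a frame. Inverting its frame operator by a Neumann series gives a bounded left inverse L of
  its analysis operator, and L_{1,k} is L on the k-th block.

  (iii) For a Riesz basis the synthesis operator of F is injective, so the analysis operator of
  F has a bounded right inverse V; R_{1,k} v is the contraction of V (v (x) e_0) against
  f_{2,k,0}.
*)
theory Submission
  imports Defs
begin

section \<open>Infinite sums\<close>

lemma infsum_of_real:
  fixes g :: "'a \<Rightarrow> real"
  shows "infsum (\<lambda>i. complex_of_real (g i)) A = complex_of_real (infsum g A)"
proof (cases "g summable_on A")
  case True
  have "((\<lambda>i. complex_of_real (g i)) has_sum complex_of_real (infsum g A)) A"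
    by (rule has_sum_bounded_linear[OF bounded_linear_of_real has_sum_infsum[OF True]])
  thus ?thesis by (rule infsumI)
next
  case False
  have "\<not> (\<lambda>i. complex_of_real (g i)) summable_on A"
  proof
    assume "(\<lambda>i. complex_of_real (g i)) summable_on A"
    from summable_on_Re[OF this] show False using False by simp
  qed
  thus ?thesis using False by (simp add: infsum_not_exists)
qed

lemma summable_on_sum:
  fixes f :: "'b \<Rightarrow> 'a \<Rightarrow> 'c::{topological_comm_monoid_add}"
  assumes "finite F" "\<And>i. i \<in> F \<Longrightarrow> f i summable_on A"
  shows "(\<lambda>j. \<Sum>i\<in>F. f i j) summable_on A"
  using assms by (induction F rule: finite_induct) (auto intro: summable_on_add)

lemma infsum_sum:
  fixes f :: "'b \<Rightarrow> 'a \<Rightarrow> 'c::{topological_comm_monoid_add, t2_space}"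
  assumes "finite F" "\<And>i. i \<in> F \<Longrightarrow> f i summable_on A"
  shows "infsum (\<lambda>j. \<Sum>i\<in>F. f i j) A = (\<Sum>i\<in>F. infsum (f i) A)"
  using assms
proof (induction F rule: finite_induct)
  case (insert x F)
  have "infsum (\<lambda>j. \<Sum>i\<in>insert x F. f i j) A = infsum (\<lambda>j. f x j + (\<Sum>i\<in>F. f i j)) A"
    using insert by simp
  also have "\<dots> = infsum (f x) A + infsum (\<lambda>j. \<Sum>i\<in>F. f i j) A"
    using insert by (intro infsum_add summable_on_sum) auto
  finally show ?case using insert by simp
qed simp

lemma infsum_if_less:
  fixes a :: "nat \<Rightarrow> 'b::{topological_comm_monoid_add, t2_space}"
  shows "(\<lambda>k. if k < r then a k else 0) summable_on UNIV
      \<and> infsum (\<lambda>k. if k < r then a k else 0) UNIV = (\<Sum>k<r. a k)"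
proof
  show "(\<lambda>k. if k < r then a k else 0) summable_on UNIV"
    by (rule summable_on_cong_neutral[where S="{..<r}" and f=a, THEN iffD1]) auto
  show "infsum (\<lambda>k. if k < r then a k else 0) UNIV = (\<Sum>k<r. a k)"
    by (subst infsum_cong_neutral[where T="{..<r}" and g=a]) auto
qed

lemma summable_on_UNIV_swap:
  "f summable_on UNIV \<longleftrightarrow> (\<lambda>p. f (prod.swap p)) summable_on UNIV"
  using summable_on_reindex_bij_betw[of prod.swap UNIV UNIV f]
  by (simp add: bij_betw_def)

lemma infsum_UNIV_swap:
  "infsum f UNIV = infsum (\<lambda>p. f (prod.swap p)) UNIV"
  using infsum_reindex_bij_betw[of prod.swap UNIV UNIV f]
  by (simp add: bij_betw_def)

lemma nonneg_infsum_pair: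
  fixes f :: "'a \<times> 'b \<Rightarrow> real"
  assumes nn: "\<And>p. f p \<ge> 0"
    and s1: "\<And>x. (\<lambda>y. f (x, y)) summable_on UNIV"
    and s2: "(\<lambda>x. infsum (\<lambda>y. f (x, y)) UNIV) summable_on UNIV"
  shows "f summable_on UNIV \<and> infsum f UNIV = infsum (\<lambda>x. infsum (\<lambda>y. f (x, y)) UNIV) UNIV"
proof -
  have "f summable_on Sigma UNIV (\<lambda>_. UNIV)"
    by (rule summable_on_SigmaI[OF _ s2]) (auto intro: has_sum_infsum s1 nn)
  hence s: "f summable_on UNIV" by simp
  have "infsum (\<lambda>x. infsum (\<lambda>y. f (x, y)) UNIV) UNIV = infsum f (Sigma UNIV (\<lambda>_. UNIV))"
    by (rule infsum_Sigma_banach) (use s in simp)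
  thus ?thesis using s by simp
qed

lemma nonneg_infsum_pair_le:
  fixes h :: "'a \<times> 'b \<Rightarrow> real"
  assumes nn: "\<And>p. h p \<ge> 0"
    and rows: "\<And>i. (\<lambda>n. h (i, n)) summable_on UNIV"
    and rows_le: "\<And>i. infsum (\<lambda>n. h (i, n)) UNIV \<le> B * w i"
    and w: "w summable_on UNIV"
  shows "h summable_on UNIV" and "infsum h UNIV \<le> B * infsum w UNIV"
proof -
  have ws: "(\<lambda>i. B * w i) summable_on UNIV" using w by (rule summable_on_cmult_right)
  have rs: "(\<lambda>i. infsum (\<lambda>n. h (i, n)) UNIV) summable_on UNIV"
    by (rule summable_on_comparison_test[OF ws]) (auto intro: infsum_nonneg nn rows_le)
  note pair = nonneg_infsum_pair[OF nn rows rs]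
  show "h summable_on UNIV" using pair by blast
  have "infsum h UNIV \<le> infsum (\<lambda>i. B * w i) UNIV"
    unfolding pair[THEN conjunct2] by (rule infsum_mono[OF rs ws rows_le])
  also have "\<dots> = B * infsum w UNIV" by (rule infsum_cmult_right[OF w])
  finally show "infsum h UNIV \<le> B * infsum w UNIV" .
qed

lemma summable_on_pairD:
  fixes f :: "'a \<times> 'b \<Rightarrow> real"
  assumes s: "f summable_on UNIV"
  shows "(\<forall>x. (\<lambda>y. f (x, y)) summable_on UNIV) \<and> (\<lambda>x. infsum (\<lambda>y. f (x, y)) UNIV) summable_on UNIV
     \<and> infsum f UNIV = infsum (\<lambda>x. infsum (\<lambda>y. f (x, y)) UNIV) UNIV"
proof -
  have s': "f summable_on Sigma UNIV (\<lambda>_. UNIV)" using s by simp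
  have a: "(\<lambda>y. f (x, y)) summable_on UNIV" for x
    using summable_on_SigmaD1[of "\<lambda>x y. f (x, y)" UNIV "\<lambda>_. UNIV" x] s' by simp
  have b: "(\<lambda>x. infsum (\<lambda>y. f (x, y)) UNIV) summable_on UNIV"
    using summable_on_SigmaD[OF s'] a by simp
  have "infsum (\<lambda>x. infsum (\<lambda>y. f (x, y)) UNIV) UNIV = infsum f (Sigma UNIV (\<lambda>_. UNIV))"
    by (rule infsum_Sigma_banach) (use s' in simp)
  thus ?thesis using a b by simp
qed

lemma summable_on_columnsD:
  fixes h :: "'a \<times> 'b \<Rightarrow> real"
  assumes "h summable_on UNIV"
  shows "(\<lambda>n. infsum (\<lambda>i. h (i, n)) UNIV) summable_on UNIV"
    and "infsum (\<lambda>n. infsum (\<lambda>i. h (i, n)) UNIV) UNIV = infsum h UNIV"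
  using summable_on_pairD[of "\<lambda>p. h (prod.swap p)"] assms
    summable_on_UNIV_swap[of h] infsum_UNIV_swap[of h] by simp_all

section \<open>Square-summable sequences\<close>

definition l2_norm :: "('i \<Rightarrow> complex) \<Rightarrow> real" where
  "l2_norm x = sqrt (l2_normsq x)"

definition zero_outside :: "'i set \<Rightarrow> ('i \<Rightarrow> complex) \<Rightarrow> 'i \<Rightarrow> complex" where
  "zero_outside F x = (\<lambda>i. if i \<in> F then x i else 0)"

definition unit_vec :: "'i \<Rightarrow> 'i \<Rightarrow> complex" where
  "unit_vec i0 = (\<lambda>i. if i = i0 then 1 else 0)"

lemma cmod_lin_comb_power2_le:
  fixes a b u v :: complex
  shows "(cmod (a * u + b * v))^2 \<le> 2 * (cmod a)^2 * (cmod u)^2 + 2 * (cmod b)^2 * (cmod v)^2"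
proof -
  have "cmod (a * u + b * v) \<le> cmod a * cmod u + cmod b * cmod v"
    by (metis norm_mult norm_triangle_ineq)
  hence "(cmod (a * u + b * v))^2 \<le> (cmod a * cmod u + cmod b * cmod v)^2"
    by (simp add: power_mono)
  also have "\<dots> \<le> 2 * (cmod a * cmod u)^2 + 2 * (cmod b * cmod v)^2"
    using sum_squares_bound[of "cmod a * cmod u" "cmod b * cmod v"] by (simp add: power2_sum)
  also have "\<dots> = 2 * (cmod a)^2 * (cmod u)^2 + 2 * (cmod b)^2 * (cmod v)^2"
    by (simp add: power_mult_distrib)
  finally show ?thesis .
qed

lemma cmod_sum_power2_le:
  fixes w :: "nat \<Rightarrow> complex"
  shows "(cmod (\<Sum>k<r. w k))^2 \<le> real r * (\<Sum>k<r. (cmod (w k))^2)"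
proof -
  have "(cmod (\<Sum>k<r. w k))^2 \<le> (\<Sum>k<r. cmod (w k))^2"
    by (intro power_mono norm_sum) simp
  also have "\<dots> \<le> (\<Sum>k<r. (cmod (w k))^2) * card {..<r}" by (rule sum_squared_le_sum_of_squares)
  finally show ?thesis by (simp add: mult.commute)
qed

lemma l2_normsq_nonneg: "l2_normsq x \<ge> 0"
  unfolding l2_normsq_def by (rule infsum_nonneg) auto

lemma l2_norm_nonneg: "l2_norm x \<ge> 0"
  unfolding l2_norm_def using l2_normsq_nonneg by simp

lemma l2_norm_power2: "(l2_norm x)^2 = l2_normsq x"
  unfolding l2_norm_def using l2_normsq_nonneg by simp

lemma is_l2_zero[simp]: "is_l2 (\<lambda>i. 0)"
  unfolding is_l2_def by simp

lemma l2_normsq_zero[simp]: "l2_normsq (\<lambda>i. 0) = 0"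
  unfolding l2_normsq_def by simp

lemma is_l2_lin_comb:
  assumes "is_l2 x" "is_l2 y"
  shows "is_l2 (\<lambda>i. a * x i + b * y i)"
proof -
  have s: "(\<lambda>i. 2 * (cmod a)^2 * (cmod (x i))^2 + 2 * (cmod b)^2 * (cmod (y i))^2) summable_on UNIV"
    using assms unfolding is_l2_def
    by (intro summable_on_add summable_on_cmult_right) auto
  show ?thesis unfolding is_l2_def
    by (rule summable_on_comparison_test[OF s]) (auto intro: cmod_lin_comb_power2_le)
qed

lemma is_l2_add: "is_l2 x \<Longrightarrow> is_l2 y \<Longrightarrow> is_l2 (\<lambda>i. x i + y i)"
  using is_l2_lin_comb[of x y 1 1] by simp

lemma is_l2_diff: "is_l2 x \<Longrightarrow> is_l2 y \<Longrightarrow> is_l2 (\<lambda>i. x i - y i)"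
  using is_l2_lin_comb[of x y 1 "-1"] by simp

lemma is_l2_scale: "is_l2 x \<Longrightarrow> is_l2 (\<lambda>i. a * x i)"
  using is_l2_lin_comb[of x x a 0] by simp

lemma is_l2_sum: "finite T \<Longrightarrow> (\<And>t. t \<in> T \<Longrightarrow> is_l2 (x t)) \<Longrightarrow> is_l2 (\<lambda>i. \<Sum>t\<in>T. x t i)"
  by (induction T rule: finite_induct) (auto intro: is_l2_add)

lemma is_l2_cnj: "is_l2 x \<Longrightarrow> is_l2 (\<lambda>i. cnj (x i))"
  unfolding is_l2_def by simp

lemma l2_inner_summable:
  assumes "is_l2 x" "is_l2 y"
  shows "(\<lambda>i. x i * cnj (y i)) summable_on UNIV"
proof -
  have s: "(\<lambda>i. (cmod (x i))^2 + (cmod (y i))^2) summable_on UNIV"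
    using assms unfolding is_l2_def by (intro summable_on_add) auto
  have "(\<lambda>i. norm (x i * cnj (y i))) summable_on UNIV"
  proof (rule summable_on_comparison_test[OF s])
    fix i
    show "norm (x i * cnj (y i)) \<le> (cmod (x i))^2 + (cmod (y i))^2"
      using sum_squares_bound[of "cmod (x i)" "cmod (y i)"]
        mult_nonneg_nonneg[OF norm_ge_zero[of "x i"] norm_ge_zero[of "y i"]]
      unfolding norm_mult complex_mod_cnj by linarith
  qed auto
  thus ?thesis by (rule abs_summable_summable)
qed

lemma l2_inner_lin_comb_left:
  assumes "is_l2 x" "is_l2 y" "is_l2 z"
  shows "l2_inner (\<lambda>i. a * x i + b * y i) z = a * l2_inner x z + b * l2_inner y z"
proof -
  have "l2_inner (\<lambda>i. a * x i + b * y i) z = infsum (\<lambda>i. a * (x i * cnj (z i))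
      + b * (y i * cnj (z i))) UNIV"
    unfolding l2_inner_def by (simp add: algebra_simps)
  also have "\<dots> = infsum (\<lambda>i. a * (x i * cnj (z i))) UNIV + infsum (\<lambda>i. b * (y i * cnj (z i))) UNIV"
    by (intro infsum_add summable_on_cmult_right l2_inner_summable assms)
  also have "\<dots> = a * l2_inner x z + b * l2_inner y z"
    unfolding l2_inner_def
    by (subst infsum_cmult_right, intro l2_inner_summable assms, auto)+
  finally show ?thesis .
qed

lemma l2_inner_commute: "l2_inner y x = cnj (l2_inner x y)"
  unfolding l2_inner_def infsum_cnj[symmetric] by (simp add: mult.commute)

lemma l2_inner_lin_comb_right:
  assumes "is_l2 x" "is_l2 y" "is_l2 z"
  shows "l2_inner z (\<lambda>i. a * x i + b * y i) = cnj a * l2_inner z x + cnj b * l2_inner z y"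
  by (subst l2_inner_commute, subst l2_inner_lin_comb_left[OF assms])
    (simp add: l2_inner_commute[of z])

lemma l2_inner_zero_right[simp]: "l2_inner x (\<lambda>i. 0) = 0"
  unfolding l2_inner_def by simp

lemma l2_inner_zero_left[simp]: "l2_inner (\<lambda>i. 0) x = 0"
  unfolding l2_inner_def by simp

lemma l2_inner_diff_right:
  assumes "is_l2 x" "is_l2 y" "is_l2 z"
  shows "l2_inner z (\<lambda>i. x i - y i) = l2_inner z x - l2_inner z y"
  using l2_inner_lin_comb_right[OF assms, of 1 "-1"] by simp

lemma l2_inner_add_add:
  assumes "is_l2 a" "is_l2 b" "is_l2 c" "is_l2 d"
  shows "l2_inner (\<lambda>i. a i + b i) (\<lambda>i. c i + d i) =
    l2_inner a c + l2_inner a d + l2_inner b c + l2_inner b d"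
  using l2_inner_lin_comb_left[OF assms(1,2) is_l2_add[OF assms(3,4)], of 1 1]
    l2_inner_lin_comb_right[OF assms(3,4) assms(1), of 1 1]
      l2_inner_lin_comb_right[OF assms(3,4) assms(2), of 1 1]
  by simp

lemma l2_inner_diff_diff:
  assumes "is_l2 a" "is_l2 b" "is_l2 c" "is_l2 d"
  shows "l2_inner (\<lambda>i. a i - b i) (\<lambda>i. c i - d i) =
    l2_inner a c - l2_inner a d - l2_inner b c + l2_inner b d"
  using l2_inner_lin_comb_left[OF assms(1,2) is_l2_diff[OF assms(3,4)], of 1 "-1"]
    l2_inner_lin_comb_right[OF assms(3,4) assms(1), of 1 "-1"]
      l2_inner_lin_comb_right[OF assms(3,4) assms(2), of 1 "-1"]
  by simp

lemma l2_inner_sum_right: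
  assumes "finite K" "\<And>k. k \<in> K \<Longrightarrow> is_l2 (w k)" "is_l2 z"
  shows "l2_inner z (\<lambda>i. \<Sum>k\<in>K. a k * w k i) = (\<Sum>k\<in>K. cnj (a k) * l2_inner z (w k))"
  using assms(1,2)
proof (induction K rule: finite_induct)
  case (insert k K)
  have l: "is_l2 (w k)" "is_l2 (\<lambda>i. \<Sum>k\<in>K. a k * w k i)"
    using insert by (auto intro!: is_l2_sum is_l2_scale)
  have "l2_inner z (\<lambda>i. \<Sum>k\<in>insert k K. a k * w k i) = l2_inner z (\<lambda>i. a k * w k i
      + 1 * (\<Sum>k\<in>K. a k * w k i))"
    using insert by simp
  also have "\<dots> = cnj (a k) * l2_inner z (w k) + l2_inner z (\<lambda>i. \<Sum>k\<in>K. a k * w k i)"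
    using l2_inner_lin_comb_right[OF l assms(3), where a="a k" and b=1] by simp
  finally show ?case using insert by simp
qed simp

lemma l2_inner_self: "l2_inner x x = complex_of_real (l2_normsq x)"
proof -
  have "l2_inner x x = infsum (\<lambda>i. complex_of_real ((cmod (x i))^2)) UNIV"
    unfolding l2_inner_def by (rule infsum_cong)
      (simp add: complex_norm_square[symmetric] del: of_real_power)
  also have "\<dots> = complex_of_real (l2_normsq x)"
    unfolding l2_normsq_def by (rule infsum_of_real)
  finally show ?thesis .
qed

lemma l2_normsq_eq_Re_inner: "l2_normsq x = Re (l2_inner x x)"
  by (simp add: l2_inner_self)

lemma l2_normsq_eq_0D:
  assumes "is_l2 x" "l2_normsq x = 0"
  shows "x = (\<lambda>i. 0)"
proof
  fix i
  have "(cmod (x i))^2 = 0"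
    using nonneg_infsum_le_0D[of "\<lambda>i. (cmod (x i))^2" UNIV i] assms
    unfolding is_l2_def l2_normsq_def by auto
  thus "x i = 0" by simp
qed

lemma l2_coord_power2_le:
  assumes "is_l2 x"
  shows "(cmod (x i))^2 \<le> l2_normsq x"
  using finite_sum_le_infsum[of "\<lambda>i. (cmod (x i))^2" UNIV "{i}"] assms
  unfolding is_l2_def l2_normsq_def by auto

lemma l2_coord_le_norm:
  assumes "is_l2 x"
  shows "cmod (x i) \<le> l2_norm x"
  unfolding l2_norm_def using l2_coord_power2_le[OF assms, of i] real_le_rsqrt by blast

lemma l2_normsq_scale:
  assumes "is_l2 x"
  shows "l2_normsq (\<lambda>i. a * x i) = (cmod a)^2 * l2_normsq x"
  unfolding l2_normsq_def
  using assms unfolding is_l2_def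
  by (simp add: norm_mult power_mult_distrib infsum_cmult_right)

lemma l2_norm_scale:
  assumes "is_l2 x"
  shows "l2_norm (\<lambda>i. a * x i) = cmod a * l2_norm x"
  unfolding l2_norm_def l2_normsq_scale[OF assms] by (simp add: real_sqrt_mult)

lemma l2_normsq_lin_comb:
  assumes "is_l2 x" "is_l2 y"
  shows "l2_normsq (\<lambda>i. a * x i + b * y i) =
     (cmod a)^2 * l2_normsq x + (cmod b)^2 * l2_normsq y + 2 * Re (a * cnj b * l2_inner x y)"
proof -
  let ?z = "\<lambda>i. a * x i + b * y i"
  have z: "is_l2 ?z" using assms by (rule is_l2_lin_comb)
  have "l2_inner ?z ?z = a * l2_inner x ?z + b * l2_inner y ?z"
    by (rule l2_inner_lin_comb_left[OF assms z])
  also have "\<dots> = a * (cnj a * l2_inner x x + cnj b * l2_inner x y)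
      + b * (cnj a * l2_inner y x + cnj b * l2_inner y y)"
    by (simp add: l2_inner_lin_comb_right[OF assms] assms)
  finally have e: "l2_inner ?z ?z = a * (cnj a * l2_inner x x + cnj b * l2_inner x y)
      + b * (cnj a * l2_inner y x + cnj b * l2_inner y y)" .
  have r1: "Re (a * (cnj a * l2_inner x x)) = (cmod a)^2 * l2_normsq x"
    by (simp add: l2_inner_self mult.assoc[symmetric] complex_norm_square[symmetric]
      del: of_real_power)
  have r2: "Re (b * (cnj b * l2_inner y y)) = (cmod b)^2 * l2_normsq y"
    by (simp add: l2_inner_self mult.assoc[symmetric] complex_norm_square[symmetric]
      del: of_real_power)
  have r3: "Re (b * (cnj a * l2_inner y x)) = Re (a * cnj b * l2_inner x y)"
  proof -
    have "b * (cnj a * l2_inner y x) = cnj (a * cnj b * l2_inner x y)"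
      by (subst l2_inner_commute[of y x]) (simp add: mult.commute mult.left_commute)
    hence "Re (b * (cnj a * l2_inner y x)) = Re (cnj (a * cnj b * l2_inner x y))" by (rule arg_cong)
    thus ?thesis by (simp only: cnj.sel(1))
  qed
  show ?thesis
    unfolding l2_normsq_eq_Re_inner[of ?z] e using r1 r2 r3 by (simp add: algebra_simps)
qed

lemma l2_Cauchy_Schwarz_power2:
  assumes "is_l2 x" "is_l2 y"
  shows "(cmod (l2_inner x y))^2 \<le> l2_normsq x * l2_normsq y"
proof (cases "l2_normsq y = 0")
  case True
  hence "y = (\<lambda>i. 0)" using l2_normsq_eq_0D assms by blast
  thus ?thesis using True by simp
next
  case False
  hence ny: "l2_normsq y > 0" using l2_normsq_nonneg[of y] by linarith
  define t where "t = l2_inner x y / complex_of_real (l2_normsq y)"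
  have "0 \<le> l2_normsq (\<lambda>i. 1 * x i + (- t) * y i)" by (rule l2_normsq_nonneg)
  also have "\<dots> = l2_normsq x + (cmod t)^2 * l2_normsq y - 2 * Re (cnj t * l2_inner x y)"
    using l2_normsq_lin_comb[OF assms, of 1 "-t"] by simp
  also have "(cmod t)^2 * l2_normsq y = (cmod (l2_inner x y))^2 / l2_normsq y"
    unfolding t_def using ny by (simp add: norm_divide power_divide power2_eq_square)
  also have "Re (cnj t * l2_inner x y) = (cmod (l2_inner x y))^2 / l2_normsq y"
  proof -
    have "cnj t * l2_inner x y = complex_of_real ((cmod (l2_inner x y))^2 / l2_normsq y)"
      unfolding t_def using ny
      by (simp add: complex_norm_square mult.commute del: of_real_power)
    thus ?thesis by (metis Re_complex_of_real)
  qed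
  finally have "(cmod (l2_inner x y))^2 / l2_normsq y \<le> l2_normsq x" by simp
  thus ?thesis using ny by (simp add: divide_le_eq mult.commute)
qed

lemma l2_Cauchy_Schwarz:
  assumes "is_l2 x" "is_l2 y"
  shows "cmod (l2_inner x y) \<le> l2_norm x * l2_norm y"
proof -
  have "(cmod (l2_inner x y))^2 \<le> (l2_norm x * l2_norm y)^2"
    using l2_Cauchy_Schwarz_power2[OF assms] by (simp add: power_mult_distrib l2_norm_power2)
  thus ?thesis using l2_norm_nonneg[of x] l2_norm_nonneg[of y]
    by (meson mult_nonneg_nonneg power2_le_imp_le)
qed

lemma l2_norm_triangle:
  assumes "is_l2 x" "is_l2 y"
  shows "l2_norm (\<lambda>i. x i + y i) \<le> l2_norm x + l2_norm y"
proof -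
  have "l2_normsq (\<lambda>i. x i + y i) = l2_normsq x + l2_normsq y + 2 * Re (l2_inner x y)"
    using l2_normsq_lin_comb[OF assms, of 1 1] by simp
  also have "Re (l2_inner x y) \<le> l2_norm x * l2_norm y"
    using l2_Cauchy_Schwarz[OF assms] complex_Re_le_cmod order_trans by blast
  hence "l2_normsq x + l2_normsq y + 2 * Re (l2_inner x y) \<le> (l2_norm x + l2_norm y)^2"
    by (simp add: power2_sum l2_norm_power2)
  finally have "(l2_norm (\<lambda>i. x i + y i))^2 \<le> (l2_norm x + l2_norm y)^2"
    by (simp add: l2_norm_power2)
  thus ?thesis using l2_norm_nonneg[of x] l2_norm_nonneg[of y]
    by (meson add_nonneg_nonneg power2_le_imp_le)
qed

lemma l2_parallelogram:
  assumes "is_l2 x" "is_l2 y"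
  shows "l2_normsq (\<lambda>i. x i + y i) + l2_normsq (\<lambda>i. x i - y i) = 2 * l2_normsq x + 2 * l2_normsq y"
  using l2_normsq_lin_comb[OF assms, of 1 1] l2_normsq_lin_comb[OF assms, of 1 "-1"] by simp

lemma l2_normsq_sum_le:
  fixes t :: "nat \<Rightarrow> 'i \<Rightarrow> complex"
  assumes t: "\<And>k. k < r \<Longrightarrow> is_l2 (t k)"
  shows "l2_normsq (\<lambda>p. \<Sum>k<r. t k p) \<le> real r * (\<Sum>k<r. l2_normsq (t k))"
proof -
  let ?G = "\<lambda>k p. (cmod (t k p))^2"
  have G: "?G k summable_on UNIV" if "k < r" for k using t[OF that] unfolding is_l2_def .
  have sf: "(\<lambda>p. \<Sum>k<r. ?G k p) summable_on UNIV" using G by (intro summable_on_sum) auto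
  have s: "(\<lambda>p. real r * (\<Sum>k<r. ?G k p)) summable_on UNIV" using sf
    by (rule summable_on_cmult_right)
  have "is_l2 (\<lambda>p. \<Sum>k<r. t k p)" using t by (intro is_l2_sum) auto
  hence "l2_normsq (\<lambda>p. \<Sum>k<r. t k p) \<le> infsum (\<lambda>p. real r * (\<Sum>k<r. ?G k p)) UNIV"
    unfolding l2_normsq_def is_l2_def by (intro infsum_mono s cmod_sum_power2_le)
  also have "\<dots> = real r * (\<Sum>k<r. l2_normsq (t k))"
    using infsum_cmult_right[OF sf, of "real r"] infsum_sum[of "{..<r}" ?G UNIV] G
    unfolding l2_normsq_def by simp
  finally show ?thesis .
qed

lemma is_l2_unit_vec[simp]: "is_l2 (unit_vec i)"
  unfolding is_l2_def unit_vec_def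
  by (rule summable_on_cong_neutral[where S="{i}", THEN iffD1]) auto

lemma l2_normsq_unit_vec[simp]: "l2_normsq (unit_vec i) = 1"
  unfolding l2_normsq_def unit_vec_def
  by (subst infsum_cong_neutral[where T="{i}" and g="\<lambda>_. 1"]) auto

lemma l2_inner_unit_vec_left: "l2_inner (unit_vec i) x = cnj (x i)"
  unfolding l2_inner_def unit_vec_def
  by (subst infsum_cong_neutral[where T="{i}" and g="\<lambda>_. cnj (x i)"]) auto

lemma is_l2_zero_outside: "finite F \<Longrightarrow> is_l2 (zero_outside F x)"
  unfolding is_l2_def zero_outside_def
  by (rule summable_on_cong_neutral[where S="F", THEN iffD1]) auto

lemma zero_outside_eq_sum: "finite F \<Longrightarrow> zero_outside F v = (\<lambda>i'. \<Sum>i\<in>F. v i * unit_vec i i')"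
  unfolding zero_outside_def unit_vec_def by (auto simp: if_distrib sum.If_cases cong: if_cong)

lemma l2_inner_zero_outside_right: "finite F \<Longrightarrow> l2_inner z (zero_outside F x)
    = (\<Sum>i\<in>F. z i * cnj (x i))"
  unfolding l2_inner_def zero_outside_def
  by (subst infsum_cong_neutral[where T="F" and g="\<lambda>i. z i * cnj (x i)"]) auto

lemma l2_inner_zero_outside_left: "finite F \<Longrightarrow> l2_inner (zero_outside F x) z
    = (\<Sum>i\<in>F. x i * cnj (z i))"
  unfolding l2_inner_def zero_outside_def
  by (subst infsum_cong_neutral[where T="F" and g="\<lambda>i. x i * cnj (z i)"]) auto

lemma l2_normsq_zero_outside: "finite F \<Longrightarrow> l2_normsq (zero_outside F x) = (\<Sum>i\<in>F. (cmod (x i))^2)"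
  unfolding l2_normsq_def zero_outside_def
  by (subst infsum_cong_neutral[where T="F" and g="\<lambda>i. (cmod (x i))^2"]) auto

lemma l2_normsq_tail:
  assumes "is_l2 x" "finite F"
  shows "l2_normsq (\<lambda>i. x i - zero_outside F x i) = l2_normsq x - (\<Sum>i\<in>F. (cmod (x i))^2)"
proof -
  have s1: "(\<lambda>i. if i \<in> F then (cmod (x i))^2 else 0) summable_on UNIV"
    by (rule summable_on_cong_neutral[where S="F", THEN iffD1]) (auto simp: assms)
  have s: "(\<lambda>i. (cmod (x i))^2) summable_on UNIV" using assms unfolding is_l2_def by simp
  have s2: "(\<lambda>i. (cmod (x i))^2 - (if i \<in> F then (cmod (x i))^2 else 0)) summable_on UNIV"
    using summable_on_add[OF s summable_on_uminus[THEN iffD2, OF s1]] by simp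
  have "l2_normsq x = infsum (\<lambda>i. (cmod (x i))^2 - (if i \<in> F then (cmod (x i))^2 else 0)
        + (if i \<in> F then (cmod (x i))^2 else 0)) UNIV"
    unfolding l2_normsq_def by simp
  also have "\<dots> = infsum (\<lambda>i. (cmod (x i))^2 - (if i \<in> F then (cmod (x i))^2 else 0)) UNIV
     + infsum (\<lambda>i. if i \<in> F then (cmod (x i))^2 else 0) UNIV"
    by (rule infsum_add[OF s2 s1])
  also have "infsum (\<lambda>i. if i \<in> F then (cmod (x i))^2 else 0) UNIV = (\<Sum>i\<in>F. (cmod (x i))^2)"
    by (subst infsum_cong_neutral[where T="F" and g="\<lambda>i. (cmod (x i))^2"]) (auto simp: assms)
  also have "infsum (\<lambda>i. (cmod (x i))^2 - (if i \<in> F then (cmod (x i))^2 else 0)) UNIV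
      = l2_normsq (\<lambda>i. x i - zero_outside F x i)"
    unfolding l2_normsq_def zero_outside_def by (rule infsum_cong) auto
  finally show ?thesis by simp
qed

lemma l2_normsq_tail_tendsto:
  assumes "is_l2 x"
  shows "((\<lambda>F. l2_normsq (\<lambda>i. x i - zero_outside F x i)) \<longlongrightarrow> 0) (finite_subsets_at_top UNIV)"
proof -
  have t: "((\<lambda>F. \<Sum>i\<in>F. (cmod (x i))^2) \<longlongrightarrow> l2_normsq x) (finite_subsets_at_top UNIV)"
    unfolding l2_normsq_def using infsum_tendsto assms unfolding is_l2_def by blast
  have "((\<lambda>F. l2_normsq x - (\<Sum>i\<in>F. (cmod (x i))^2)) \<longlongrightarrow> l2_normsq x - l2_normsq x)
      (finite_subsets_at_top UNIV)"
    by (intro tendsto_diff tendsto_const t)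
  hence "((\<lambda>F. l2_normsq x - (\<Sum>i\<in>F. (cmod (x i))^2)) \<longlongrightarrow> 0) (finite_subsets_at_top UNIV)" by simp
  moreover have "eventually (\<lambda>F. l2_normsq x - (\<Sum>i\<in>F. (cmod (x i))^2)
      = l2_normsq (\<lambda>i. x i - zero_outside F x i)) (finite_subsets_at_top UNIV)"
    using l2_normsq_tail[OF assms] by (auto simp: eventually_finite_subsets_at_top_weakI)
  ultimately show ?thesis by (rule Lim_transform_eventually)
qed

lemma l2_norm_tail_tendsto:
  assumes "is_l2 x"
  shows "((\<lambda>F. l2_norm (\<lambda>i. x i - zero_outside F x i)) \<longlongrightarrow> 0) (finite_subsets_at_top UNIV)"
  unfolding l2_norm_def using tendsto_real_sqrt[OF l2_normsq_tail_tendsto[OF assms]] by simp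

lemma is_l2_if_finite_sums_bounded:
  assumes "\<And>F. finite F \<Longrightarrow> (\<Sum>i\<in>F. (cmod (y i))^2) \<le> K"
  shows "is_l2 y \<and> l2_normsq y \<le> K"
proof
  show "is_l2 y" unfolding is_l2_def
    by (rule nonneg_bdd_above_summable_on) (auto intro!: bdd_aboveI2 assms)
  thus "l2_normsq y \<le> K" unfolding l2_normsq_def is_l2_def
    by (intro infsum_le_finite_sums assms) auto
qed

lemma is_l2_if_finite_sums_bounded_sqrt:
  assumes "K \<ge> 0" "\<And>F. finite F \<Longrightarrow> (\<Sum>i\<in>F. (cmod (y i))^2) \<le> K * sqrt (\<Sum>i\<in>F. (cmod (y i))^2)"
  shows "is_l2 y \<and> l2_normsq y \<le> K^2"
proof (rule is_l2_if_finite_sums_bounded)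
  fix F :: "'a set" assume F: "finite F"
  define a where "a = (\<Sum>i\<in>F. (cmod (y i))^2)"
  have a0: "a \<ge> 0" unfolding a_def by (simp add: sum_nonneg)
  have "a \<le> K * sqrt a" using assms(2)[OF F] unfolding a_def .
  hence "sqrt a * sqrt a \<le> K * sqrt a" using a0 by simp
  hence "sqrt a \<le> K"
    by (metis a0 assms(1) mult_le_cancel_right mult_zero_left order_le_less real_sqrt_gt_0_iff
      real_sqrt_zero)
  hence "(sqrt a)^2 \<le> K^2" by (rule power_mono) (simp add: a0)
  thus "(\<Sum>i\<in>F. (cmod (y i))^2) \<le> K^2" using a0 unfolding a_def by simp
qed

lemma l2_inner_eq_by_truncation:
  assumes a: "is_l2 a" and v: "is_l2 v"
    and eq: "\<And>F. finite F \<Longrightarrow> l2_inner a (zero_outside F v) = \<phi> (zero_outside F v)"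
    and bd: "\<And>F. finite F \<Longrightarrow> cmod (\<phi> v - \<phi> (zero_outside F v))
        \<le> K * l2_norm (\<lambda>i. v i - zero_outside F v i)"
  shows "l2_inner a v = \<phi> v"
proof -
  have le: "cmod (l2_inner a v - \<phi> v) \<le> (l2_norm a + K) * l2_norm (\<lambda>i. v i - zero_outside F v i)"
    if F: "finite F" for F
  proof -
    have "l2_inner a v - \<phi> v
        = l2_inner a (\<lambda>i. v i - zero_outside F v i) - (\<phi> v - \<phi> (zero_outside F v))"
      using eq[OF F] l2_inner_diff_right[OF v is_l2_zero_outside[OF F] a] by simp
    hence "cmod (l2_inner a v - \<phi> v) \<le> cmod (l2_inner a (\<lambda>i. v i - zero_outside F v i))
        + cmod (\<phi> v - \<phi> (zero_outside F v))"
      by (metis norm_triangle_ineq4)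
    also have "\<dots> \<le> l2_norm a * l2_norm (\<lambda>i. v i - zero_outside F v i)
        + K * l2_norm (\<lambda>i. v i - zero_outside F v i)"
      by (intro add_mono l2_Cauchy_Schwarz a is_l2_diff v is_l2_zero_outside F bd)
    finally show ?thesis by (simp add: algebra_simps)
  qed
  have "((\<lambda>F. (l2_norm a + K) * l2_norm (\<lambda>i. v i - zero_outside F v i))
      \<longlongrightarrow> (l2_norm a + K) * 0) (finite_subsets_at_top UNIV)"
    by (intro tendsto_mult tendsto_const l2_norm_tail_tendsto v)
  hence "((\<lambda>F. (l2_norm a + K) * l2_norm (\<lambda>i. v i - zero_outside F v i))
      \<longlongrightarrow> 0) (finite_subsets_at_top UNIV)" by simp
  hence "cmod (l2_inner a v - \<phi> v) \<le> 0"
    by (rule tendsto_lowerbound[where a="cmod (l2_inner a v - \<phi> v)"])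
       (auto intro!: eventually_finite_subsets_at_top_weakI le)
  thus ?thesis by simp
qed

lemma L2_set_le_l2_norm:
  assumes "is_l2 w" "finite F"
  shows "L2_set (\<lambda>i. cmod (w i)) F \<le> l2_norm w"
proof -
  have "(\<Sum>i\<in>F. (cmod (w i))^2) \<le> l2_normsq w"
    unfolding l2_normsq_def using assms unfolding is_l2_def
    by (intro finite_sum_le_infsum) auto
  thus ?thesis unfolding L2_set_def l2_norm_def by simp
qed

lemma L2_set_sum_le:
  fixes K :: nat
  shows "L2_set (\<lambda>i. cmod (\<Sum>n<K. w n i)) F \<le> (\<Sum>n<K. L2_set (\<lambda>i. cmod (w n i)) F)"
proof (induction K)
  case (Suc K)
  have "L2_set (\<lambda>i. cmod (\<Sum>n<Suc K. w n i)) F \<le> L2_set (\<lambda>i. cmod (\<Sum>n<K. w n i) + cmod (w K i)) F"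
    by (rule L2_set_mono) (auto intro: norm_triangle_ineq)
  also have "\<dots> \<le> L2_set (\<lambda>i. cmod (\<Sum>n<K. w n i)) F + L2_set (\<lambda>i. cmod (w K i)) F"
    by (rule L2_set_triangle_ineq)
  finally show ?case using Suc by simp
qed (simp add: L2_set_def)

lemma l2_series_norm_le:
  assumes l2: "\<And>n. is_l2 (w n)" and sm: "summable (\<lambda>n. l2_norm (w n))"
  shows "(\<forall>i. summable (\<lambda>n. w n i)) \<and> is_l2 (\<lambda>i. \<Sum>n. w n i) \<and>
    l2_norm (\<lambda>i. \<Sum>n. w n i) \<le> (\<Sum>n. l2_norm (w n))"
proof -
  define T where "T = (\<Sum>n. l2_norm (w n))"
  have T0: "T \<ge> 0" unfolding T_def by (intro suminf_nonneg sm l2_norm_nonneg)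
  have pw: "summable (\<lambda>n. w n i)" for i
    by (rule summable_comparison_test[OF _ sm]) (auto intro: l2_coord_le_norm l2)
  have "(\<Sum>i\<in>F. (cmod (\<Sum>n. w n i))^2) \<le> T^2" if F: "finite F" for F
  proof -
    have "L2_set (\<lambda>i. cmod (\<Sum>n<K. w n i)) F \<le> T" for K
    proof -
      have "L2_set (\<lambda>i. cmod (\<Sum>n<K. w n i)) F \<le> (\<Sum>n<K. L2_set (\<lambda>i. cmod (w n i)) F)"
        by (rule L2_set_sum_le)
      also have "\<dots> \<le> (\<Sum>n<K. l2_norm (w n))"
        by (intro sum_mono L2_set_le_l2_norm l2 F)
      also have "\<dots> \<le> T" unfolding T_def
        by (intro sum_le_suminf sm) (auto intro: l2_norm_nonneg)
      finally show ?thesis .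
    qed
    moreover have "(\<lambda>K. L2_set (\<lambda>i. cmod (\<Sum>n<K. w n i)) F) \<longlonglongrightarrow> L2_set (\<lambda>i. cmod (\<Sum>n. w n i)) F"
      unfolding L2_set_def by (intro tendsto_intros summable_LIMSEQ pw)
    ultimately have "L2_set (\<lambda>i. cmod (\<Sum>n. w n i)) F \<le> T"
      by (intro LIMSEQ_le_const2) auto
    hence "(L2_set (\<lambda>i. cmod (\<Sum>n. w n i)) F)^2 \<le> T^2"
      by (intro power_mono) auto
    thus ?thesis unfolding L2_set_def by (simp add: sum_nonneg)
  qed
  hence "is_l2 (\<lambda>i. \<Sum>n. w n i) \<and> l2_normsq (\<lambda>i. \<Sum>n. w n i) \<le> T^2"
    by (rule is_l2_if_finite_sums_bounded)
  moreover hence "l2_norm (\<lambda>i. \<Sum>n. w n i) \<le> T"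
    unfolding l2_norm_def using T0 real_le_lsqrt by blast
  ultimately show ?thesis using pw unfolding T_def by blast
qed

lemma l2_series_tail:
  assumes l2: "\<And>n. is_l2 (v n)" and sm: "summable (\<lambda>n. l2_norm (v n))"
  shows "(\<forall>i. summable (\<lambda>n. v n i)) \<and> is_l2 (\<lambda>i. \<Sum>n. v n i) \<and>
     (\<forall>N. is_l2 (\<lambda>i. (\<Sum>n. v n i) - (\<Sum>n<N. v n i)) \<and>
          l2_norm (\<lambda>i. (\<Sum>n. v n i) - (\<Sum>n<N. v n i)) \<le> (\<Sum>n. l2_norm (v (n + N))))"
proof -
  have A: "(\<forall>i. summable (\<lambda>n. v n i)) \<and> is_l2 (\<lambda>i. \<Sum>n. v n i)"
    using l2_series_norm_le[OF l2 sm] by blast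
  have B: "is_l2 (\<lambda>i. (\<Sum>n. v n i) - (\<Sum>n<N. v n i)) \<and>
          l2_norm (\<lambda>i. (\<Sum>n. v n i) - (\<Sum>n<N. v n i)) \<le> (\<Sum>n. l2_norm (v (n + N)))" for N
  proof -
    have eq: "(\<lambda>i. (\<Sum>n. v n i) - (\<Sum>n<N. v n i)) = (\<lambda>i. \<Sum>n. v (n + N) i)"
    proof
      fix i
      show "(\<Sum>n. v n i) - (\<Sum>n<N. v n i) = (\<Sum>n. v (n + N) i)"
        using suminf_split_initial_segment[of "\<lambda>n. v n i" N] A by simp
    qed
    show ?thesis unfolding eq
      using l2_series_norm_le[of "\<lambda>n. v (n + N)"] l2 summable_ignore_initial_segment[OF sm, of N]
        by blast
  qed
  show ?thesis using A B by blast
qed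

section \<open>Bounded operators\<close>

lemma bounded_op_is_l2: "bounded_op T \<Longrightarrow> is_l2 x \<Longrightarrow> is_l2 (T x)"
  unfolding bounded_op_def by blast

lemma bounded_op_lin_comb: "bounded_op T \<Longrightarrow> is_l2 x \<Longrightarrow> is_l2 y \<Longrightarrow>
   T (\<lambda>i. a * x i + b * y i) = (\<lambda>i. a * T x i + b * T y i)"
  unfolding bounded_op_def by blast

lemma bounded_op_norm_bound:
  assumes "bounded_op T"
  obtains C where "C \<ge> 0" "\<And>x. is_l2 x \<Longrightarrow> l2_norm (T x) \<le> C * l2_norm x"
proof -
  obtain C0 where C0: "\<And>x. is_l2 x \<Longrightarrow> l2_normsq (T x) \<le> C0 * l2_normsq x"
    using assms unfolding bounded_op_def by blast
  have "l2_norm (T x) \<le> sqrt (max C0 0) * l2_norm x" if "is_l2 x" for x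
  proof -
    have "l2_normsq (T x) \<le> max C0 0 * l2_normsq x"
      using C0[OF that] l2_normsq_nonneg[of x]
      by (meson max.cobounded1 mult_right_mono order_trans)
    hence "sqrt (l2_normsq (T x)) \<le> sqrt (max C0 0 * l2_normsq x)"
      by (rule real_sqrt_le_mono)
    thus ?thesis unfolding l2_norm_def by (simp add: real_sqrt_mult)
  qed
  thus ?thesis using that[of "sqrt (max C0 0)"] by simp
qed

lemma bounded_opI:
  assumes "\<And>x. is_l2 x \<Longrightarrow> is_l2 (T x)"
    and "\<And>x y a b. is_l2 x \<Longrightarrow> is_l2 y \<Longrightarrow> T (\<lambda>i. a * x i + b * y i) = (\<lambda>i. a * T x i + b * T y i)"
    and "\<And>x. is_l2 x \<Longrightarrow> l2_norm (T x) \<le> C * l2_norm x"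
  shows "bounded_op T"
  unfolding bounded_op_def
proof (intro conjI allI impI exI)
  fix x :: "'a \<Rightarrow> complex" assume x: "is_l2 x"
  have "(l2_norm (T x))^2 \<le> (C * l2_norm x)^2"
    using assms(3)[OF x] by (intro power_mono) (auto intro: l2_norm_nonneg)
  thus "l2_normsq (T x) \<le> C^2 * l2_normsq x" by (simp add: l2_norm_power2 power_mult_distrib)
qed (use assms in auto)

lemma bounded_op_zero: "bounded_op T \<Longrightarrow> T (\<lambda>i. 0) = (\<lambda>i. 0)"
  using bounded_op_lin_comb[of T "\<lambda>i. 0" "\<lambda>i. 0" 0 0] by simp

lemma bounded_op_add: "bounded_op T \<Longrightarrow> is_l2 x \<Longrightarrow> is_l2 y \<Longrightarrow> T (\<lambda>i. x i + y i) = (\<lambda>i. T x i + T y i)"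
  using bounded_op_lin_comb[of T x y 1 1] by simp

lemma bounded_op_diff: "bounded_op T \<Longrightarrow> is_l2 x \<Longrightarrow> is_l2 y \<Longrightarrow> T (\<lambda>i. x i - y i) = (\<lambda>i. T x i - T y i)"
  using bounded_op_lin_comb[of T x y 1 "-1"] by simp

lemma bounded_op_scale: "bounded_op T \<Longrightarrow> is_l2 x \<Longrightarrow> T (\<lambda>i. a * x i) = (\<lambda>i. a * T x i)"
  using bounded_op_lin_comb[of T x x a 0] by simp

lemma bounded_op_sum:
  assumes "bounded_op T" "finite K" "\<And>k. k \<in> K \<Longrightarrow> is_l2 (x k)"
  shows "T (\<lambda>i. \<Sum>k\<in>K. x k i) = (\<lambda>i'. \<Sum>k\<in>K. T (x k) i')"
  using assms(2,3)
proof (induction K rule: finite_induct)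
  case empty thus ?case using bounded_op_zero[OF assms(1)] by simp
next
  case (insert k K)
  have l: "is_l2 (x k)" "is_l2 (\<lambda>i. \<Sum>k\<in>K. x k i)" using insert.prems
    by (auto intro: is_l2_sum insert.hyps)
  have IH: "T (\<lambda>i. \<Sum>k\<in>K. x k i) = (\<lambda>i'. \<Sum>k\<in>K. T (x k) i')"
    using insert.IH insert.prems by blast
  have e1: "(\<lambda>i. \<Sum>k\<in>insert k K. x k i) = (\<lambda>i. x k i + (\<Sum>k\<in>K. x k i))"
    using insert.hyps by (simp add: sum.insert)
  have e2: "(\<lambda>i'. \<Sum>k\<in>insert k K. T (x k) i') = (\<lambda>i'. T (x k) i' + (\<Sum>k\<in>K. T (x k) i'))"
    using insert.hyps by (simp add: sum.insert)
  show ?case unfolding e1 e2 bounded_op_add[OF assms(1) l] IH ..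
qed

lemma bounded_op_id: "bounded_op (\<lambda>x. x)"
  by (rule bounded_opI[where C=1]) auto

lemma bounded_op_comp:
  fixes S :: "('b \<Rightarrow> complex) \<Rightarrow> ('c \<Rightarrow> complex)" and T :: "('a \<Rightarrow> complex) \<Rightarrow> ('b \<Rightarrow> complex)"
  assumes "bounded_op S" "bounded_op T"
  shows "bounded_op (\<lambda>x. S (T x))"
proof -
  obtain C1 where C1: "C1 \<ge> 0" "\<And>x. is_l2 x \<Longrightarrow> l2_norm (S x) \<le> C1 * l2_norm x"
    using bounded_op_norm_bound[OF assms(1)] by blast
  obtain C2 where C2: "C2 \<ge> 0" "\<And>x. is_l2 x \<Longrightarrow> l2_norm (T x) \<le> C2 * l2_norm x"
    using bounded_op_norm_bound[OF assms(2)] by blast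
  show ?thesis
  proof (rule bounded_opI[where C="C1 * C2"])
    fix x :: "'a \<Rightarrow> complex" assume x: "is_l2 x"
    have Tx: "is_l2 (T x)" by (rule bounded_op_is_l2[OF assms(2) x])
    show "is_l2 (S (T x))" by (rule bounded_op_is_l2[OF assms(1) Tx])
    have "l2_norm (S (T x)) \<le> C1 * l2_norm (T x)" by (rule C1(2)[OF Tx])
    also have "\<dots> \<le> C1 * (C2 * l2_norm x)" by (rule mult_left_mono[OF C2(2)[OF x] C1(1)])
    finally show "l2_norm (S (T x)) \<le> C1 * C2 * l2_norm x" by (simp add: mult.assoc)
  next
    fix x y :: "'a \<Rightarrow> complex" and a b assume "is_l2 x" "is_l2 y"
    hence l: "is_l2 (T x)" "is_l2 (T y)" by (auto intro: bounded_op_is_l2[OF assms(2)])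
    have "T (\<lambda>i. a * x i + b * y i) = (\<lambda>i. a * T x i + b * T y i)"
      by (rule bounded_op_lin_comb[OF assms(2)]) fact+
    thus "S (T (\<lambda>i. a * x i + b * y i)) = (\<lambda>i. a * S (T x) i + b * S (T y) i)"
      using bounded_op_lin_comb[OF assms(1) l] by simp
  qed
qed

lemma bounded_op_lin_comb_op:
  assumes S: "bounded_op S" and T: "bounded_op T"
  shows "bounded_op (\<lambda>x i. a * S x i + b * T x i)"
proof -
  obtain C1 where C1: "C1 \<ge> 0" "\<And>x. is_l2 x \<Longrightarrow> l2_norm (S x) \<le> C1 * l2_norm x"
    using bounded_op_norm_bound[OF S] by blast
  obtain C2 where C2: "C2 \<ge> 0" "\<And>x. is_l2 x \<Longrightarrow> l2_norm (T x) \<le> C2 * l2_norm x"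
    using bounded_op_norm_bound[OF T] by blast
  show ?thesis
  proof (rule bounded_opI[where C="cmod a * C1 + cmod b * C2"])
    fix x :: "'a \<Rightarrow> complex" assume x: "is_l2 x"
    have Sx: "is_l2 (S x)" and Tx: "is_l2 (T x)" using bounded_op_is_l2 S T x by blast+
    show "is_l2 (\<lambda>i. a * S x i + b * T x i)" by (rule is_l2_lin_comb[OF Sx Tx])
    have "l2_norm (\<lambda>i. a * S x i + b * T x i) \<le> l2_norm (\<lambda>i. a * S x i) + l2_norm (\<lambda>i. b * T x i)"
      by (intro l2_norm_triangle is_l2_scale Sx Tx)
    also have "\<dots> = cmod a * l2_norm (S x) + cmod b * l2_norm (T x)"
      by (simp add: l2_norm_scale Sx Tx)
    also have "\<dots> \<le> cmod a * (C1 * l2_norm x) + cmod b * (C2 * l2_norm x)"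
      by (intro add_mono mult_left_mono C1(2) C2(2) x) auto
    finally show "l2_norm (\<lambda>i. a * S x i + b * T x i) \<le> (cmod a * C1 + cmod b * C2) * l2_norm x"
      by (simp add: algebra_simps)
  next
    fix x y :: "'a \<Rightarrow> complex" and a' b' assume x: "is_l2 x" and y: "is_l2 y"
    show "(\<lambda>i. a * S (\<lambda>i. a' * x i + b' * y i) i + b * T (\<lambda>i. a' * x i + b' * y i) i) =
        (\<lambda>i. a' * (a * S x i + b * T x i) + b' * (a * S y i + b * T y i))"
      unfolding bounded_op_lin_comb[OF S x y] bounded_op_lin_comb[OF T x y]
        by (simp add: algebra_simps)
  qed
qed

lemma bounded_op_funpow:
  fixes M :: "('i \<Rightarrow> complex) \<Rightarrow> ('i \<Rightarrow> complex)"
  assumes "bounded_op M"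
  shows "bounded_op (M ^^ n)"
proof (induction n)
  case 0 thus ?case using bounded_op_id by (simp add: id_def)
next
  case (Suc n)
  have "bounded_op (\<lambda>x. M ((M ^^ n) x))" by (rule bounded_op_comp[OF assms Suc])
  thus ?case by (simp add: comp_def)
qed

lemma bounded_op_sums:
  assumes T: "bounded_op T" and l2: "\<And>n. is_l2 (v n)" and sm: "summable (\<lambda>n. l2_norm (v n))"
  shows "(\<lambda>n. T (v n) i) sums (T (\<lambda>i. \<Sum>n. v n i) i)"
proof -
  obtain C where C: "C \<ge> 0" "\<And>x. is_l2 x \<Longrightarrow> l2_norm (T x) \<le> C * l2_norm x"
    using bounded_op_norm_bound[OF T] by blast
  note S = l2_series_tail[OF l2 sm]
  let ?s = "\<lambda>i. \<Sum>n. v n i"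
  have "(\<lambda>N. T ?s i - (\<Sum>n<N. T (v n) i)) \<longlonglongrightarrow> 0"
  proof (rule Lim_null_comparison)
    show "\<forall>\<^sub>F N in sequentially. norm (T ?s i - (\<Sum>n<N. T (v n) i)) \<le> C * (\<Sum>n. l2_norm (v (n + N)))"
    proof (rule always_eventually, rule allI)
      fix N
      have "T ?s i - (\<Sum>n<N. T (v n) i) = T (\<lambda>i. ?s i - (\<Sum>n<N. v n i)) i"
        using bounded_op_diff[OF T, of ?s "\<lambda>i. \<Sum>n<N. v n i"] bounded_op_sum[OF T, of "{..<N}" v] S
          l2
        by (simp add: is_l2_sum)
      also have "norm \<dots> \<le> l2_norm (T (\<lambda>i. ?s i - (\<Sum>n<N. v n i)))"
        by (intro l2_coord_le_norm bounded_op_is_l2[OF T]) (use S in blast)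
      also have "\<dots> \<le> C * l2_norm (\<lambda>i. ?s i - (\<Sum>n<N. v n i))"
        by (intro C) (use S in blast)
      also have "\<dots> \<le> C * (\<Sum>n. l2_norm (v (n + N)))"
        by (intro mult_left_mono C) (use S in blast)
      finally show "norm (T ?s i - (\<Sum>n<N. T (v n) i)) \<le> C * (\<Sum>n. l2_norm (v (n + N)))" .
    qed
    show "(\<lambda>N. C * (\<Sum>n. l2_norm (v (n + N)))) \<longlonglongrightarrow> 0"
      using tendsto_mult[OF tendsto_const suminf_exist_split2[OF sm], of C] by simp
  qed
  hence "(\<lambda>N. T ?s i - (T ?s i - (\<Sum>n<N. T (v n) i))) \<longlonglongrightarrow> T ?s i - 0"
    by (intro tendsto_diff tendsto_const)
  thus ?thesis unfolding sums_def by simp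
qed

lemma l2_inner_representer:
  assumes T: "bounded_op T" and z: "is_l2 z"
    and trunc: "\<And>F v. finite F \<Longrightarrow> l2_inner y (zero_outside F v) = l2_inner z (T (zero_outside F v))"
  shows "is_l2 y" and "\<And>v. is_l2 v \<Longrightarrow> l2_inner y v = l2_inner z (T v)"
proof -
  obtain C where C: "C \<ge> 0" "\<And>x. is_l2 x \<Longrightarrow> l2_norm (T x) \<le> C * l2_norm x"
    using bounded_op_norm_bound[OF T] by blast
  have bound: "cmod (l2_inner z (T v)) \<le> l2_norm z * C * l2_norm v" if "is_l2 v" for v
  proof -
    have "cmod (l2_inner z (T v)) \<le> l2_norm z * l2_norm (T v)"
      by (intro l2_Cauchy_Schwarz z bounded_op_is_l2[OF T that])
    also have "\<dots> \<le> l2_norm z * (C * l2_norm v)" by (intro mult_left_mono C that l2_norm_nonneg)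
    finally show ?thesis by (simp add: mult.assoc)
  qed
  have "is_l2 y \<and> l2_normsq y \<le> (l2_norm z * C)^2"
  proof (rule is_l2_if_finite_sums_bounded_sqrt)
    show "l2_norm z * C \<ge> 0" using l2_norm_nonneg[of z] C by simp
    fix F :: "'a set" assume F: "finite F"
    have "(\<Sum>i\<in>F. (cmod (y i))^2) = Re (l2_inner y (zero_outside F y))"
      unfolding l2_inner_zero_outside_right[OF F]
      by (simp add: complex_norm_square[symmetric] del: of_real_power)
    also have "\<dots> \<le> cmod (l2_inner z (T (zero_outside F y)))"
      unfolding trunc[OF F] by (rule complex_Re_le_cmod)
    also have "\<dots> \<le> l2_norm z * C * l2_norm (zero_outside F y)"
      by (rule bound[OF is_l2_zero_outside[OF F]])
    also have "l2_norm (zero_outside F y) = sqrt (\<Sum>i\<in>F. (cmod (y i))^2)"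
      unfolding l2_norm_def l2_normsq_zero_outside[OF F] ..
    finally show "(\<Sum>i\<in>F. (cmod (y i))^2) \<le> l2_norm z * C * sqrt (\<Sum>i\<in>F. (cmod (y i))^2)" .
  qed
  thus y: "is_l2 y" by blast
  show "l2_inner y v = l2_inner z (T v)" if v: "is_l2 v" for v
  proof (rule l2_inner_eq_by_truncation[OF y v, where K="l2_norm z * C"])
    fix F :: "'a set" assume F: "finite F"
    show "l2_inner y (zero_outside F v) = l2_inner z (T (zero_outside F v))" by (rule trunc[OF F])
    have tl: "is_l2 (zero_outside F v)" by (rule is_l2_zero_outside[OF F])
    have "l2_inner z (T v) - l2_inner z (T (zero_outside F v))
        = l2_inner z (T (\<lambda>i. v i - zero_outside F v i))"
      unfolding bounded_op_diff[OF T v tl]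
      by (rule l2_inner_diff_right[symmetric]) (intro bounded_op_is_l2[OF T] v tl z)+
    also have "cmod \<dots> \<le> l2_norm z * C * l2_norm (\<lambda>i. v i - zero_outside F v i)"
      by (intro bound is_l2_diff v tl)
    finally show "cmod (l2_inner z (T v) - l2_inner z (T (zero_outside F v)))
        \<le> l2_norm z * C * l2_norm (\<lambda>i. v i - zero_outside F v i)" .
  qed
qed

lemma bounded_op_adjoint_vector:
  fixes S :: "('a \<Rightarrow> complex) \<Rightarrow> ('b \<Rightarrow> complex)"
  assumes S: "bounded_op S" and z: "is_l2 z"
  shows "\<exists>y. is_l2 y \<and> (\<forall>v. is_l2 v \<longrightarrow> l2_inner y v = l2_inner z (S v))"
proof -
  define y where "y = (\<lambda>i. l2_inner z (S (unit_vec i)))"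
  have "l2_inner y (zero_outside F v) = l2_inner z (S (zero_outside F v))" if F: "finite F" for F v
  proof -
    have "S (zero_outside F v) = (\<lambda>i'. \<Sum>i\<in>F. S (\<lambda>i'. v i * unit_vec i i') i')"
      unfolding zero_outside_eq_sum[OF F] by (rule bounded_op_sum[OF S F])
        (rule is_l2_scale[OF is_l2_unit_vec])
    also have "\<dots> = (\<lambda>i'. \<Sum>i\<in>F. v i * S (unit_vec i) i')"
      by (simp add: bounded_op_scale[OF S is_l2_unit_vec])
    finally have "l2_inner z (S (zero_outside F v)) = (\<Sum>i\<in>F. cnj (v i)
        * l2_inner z (S (unit_vec i)))"
      using l2_inner_sum_right[OF F, of "\<lambda>i. S (unit_vec i)" z v] bounded_op_is_l2[OF S] z by simp
    thus ?thesis unfolding l2_inner_zero_outside_right[OF F] y_def by (simp add: mult.commute)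
  qed
  from l2_inner_representer[OF S z this] show ?thesis by blast
qed

lemma self_adjoint_Re_inner_le:
  fixes M :: "('i \<Rightarrow> complex) \<Rightarrow> ('i \<Rightarrow> complex)"
  assumes M: "bounded_op M"
    and sa: "\<And>x y. is_l2 x \<Longrightarrow> is_l2 y \<Longrightarrow> l2_inner (M x) y = l2_inner x (M y)"
    and qf: "\<And>x. is_l2 x \<Longrightarrow> \<bar>Re (l2_inner (M x) x)\<bar> \<le> q * l2_normsq x"
    and x: "is_l2 x" and y: "is_l2 y"
  shows "4 * Re (l2_inner (M x) y) \<le> q * (2 * l2_normsq x + 2 * l2_normsq y)"
proof -
  have Mx: "is_l2 (M x)" and My: "is_l2 (M y)" using bounded_op_is_l2[OF M] x y by blast+
  have "l2_inner (M y) x = cnj (l2_inner (M x) y)"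
    using sa[OF y x] l2_inner_commute[of "M x" y] by simp
  hence polarization: "Re (l2_inner (M (\<lambda>i. x i + y i)) (\<lambda>i. x i + y i))
      - Re (l2_inner (M (\<lambda>i. x i - y i)) (\<lambda>i. x i - y i)) = 4 * Re (l2_inner (M x) y)"
    unfolding bounded_op_add[OF M x y] bounded_op_diff[OF M x y]
      l2_inner_add_add[OF Mx My x y] l2_inner_diff_diff[OF Mx My x y] by simp
  have "Re (l2_inner (M (\<lambda>i. x i + y i)) (\<lambda>i. x i + y i)) \<le> q * l2_normsq (\<lambda>i. x i + y i)"
    and "- Re (l2_inner (M (\<lambda>i. x i - y i)) (\<lambda>i. x i - y i)) \<le> q * l2_normsq (\<lambda>i. x i - y i)"
    using qf[OF is_l2_add[OF x y]] qf[OF is_l2_diff[OF x y]] by linarith+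
  moreover have "q * l2_normsq (\<lambda>i. x i + y i) + q * l2_normsq (\<lambda>i. x i - y i) =
      q * (2 * l2_normsq x + 2 * l2_normsq y)"
    using l2_parallelogram[OF x y] by (metis distrib_left)
  ultimately show ?thesis using polarization by linarith
qed

lemma self_adjoint_norm_le:
  fixes M :: "('i \<Rightarrow> complex) \<Rightarrow> ('i \<Rightarrow> complex)"
  assumes M: "bounded_op M"
    and sa: "\<And>x y. is_l2 x \<Longrightarrow> is_l2 y \<Longrightarrow> l2_inner (M x) y = l2_inner x (M y)"
    and qf: "\<And>x. is_l2 x \<Longrightarrow> \<bar>Re (l2_inner (M x) x)\<bar> \<le> q * l2_normsq x"
    and x: "is_l2 x"
  shows "l2_norm (M x) \<le> q * l2_norm x"
proof -
  have Mx: "is_l2 (M x)" by (rule bounded_op_is_l2[OF M x])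
  consider "l2_norm x = 0"
    | "l2_norm x > 0" "l2_norm (M x) = 0"
    | "l2_norm x > 0" "l2_norm (M x) > 0"
    using l2_norm_nonneg[of x] l2_norm_nonneg[of "M x"] by linarith
  thus ?thesis
  proof cases
    case 1
    hence "x = (\<lambda>i. 0)" using l2_normsq_eq_0D[OF x] l2_norm_power2[of x] by simp
    thus ?thesis using bounded_op_zero[OF M] by (simp add: l2_norm_def)
  next
    case 2
    have "0 \<le> q * l2_normsq x" using qf[OF x] by linarith
    moreover have "l2_normsq x > 0" using 2 by (simp add: l2_norm_power2[symmetric])
    ultimately have "q \<ge> 0" by (auto simp: zero_le_mult_iff)
    thus ?thesis using 2 by simp
  next
    case 3
    \<comment> \<open>Test against \<open>y = M x\<close> rescaled to the norm of \<open>x\<close>.\<close>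
    define t where "t = l2_norm x / l2_norm (M x)"
    define y where "y = (\<lambda>i. complex_of_real t * M x i)"
    have y: "is_l2 y" unfolding y_def by (rule is_l2_scale[OF Mx])
    have "Re (l2_inner (M x) y) = l2_norm x * l2_norm (M x)"
    proof -
      have "l2_inner (M x) y = complex_of_real t * l2_inner (M x) (M x)"
        unfolding y_def using l2_inner_lin_comb_right[OF Mx Mx Mx, of "complex_of_real t" 0] by simp
      hence "Re (l2_inner (M x) y) = t * l2_normsq (M x)" by (simp add: l2_inner_self)
      thus ?thesis unfolding t_def using 3 by (simp add: l2_norm_power2[symmetric] power2_eq_square)
    qed
    moreover have "l2_normsq y = l2_normsq x"
      unfolding y_def l2_normsq_scale[OF Mx] t_def using 3
      by (simp add: l2_norm_power2[symmetric] power_divide norm_divide)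
    ultimately have "4 * (l2_norm x * l2_norm (M x)) \<le> q * (4 * (l2_norm x * l2_norm x))"
      using self_adjoint_Re_inner_le[OF M sa qf x y]
      by (simp add: l2_norm_power2[symmetric] power2_eq_square)
    thus ?thesis using 3 by (simp add: algebra_simps)
  qed
qed

lemma l2_norm_funpow_le:
  fixes M :: "('i \<Rightarrow> complex) \<Rightarrow> ('i \<Rightarrow> complex)"
  assumes "bounded_op M" "\<And>x. is_l2 x \<Longrightarrow> l2_norm (M x) \<le> q * l2_norm x" "q \<ge> 0" "is_l2 x"
  shows "l2_norm ((M ^^ n) x) \<le> q^n * l2_norm x"
proof (induction n)
  case 0 thus ?case by simp
next
  case (Suc n)
  have "l2_norm ((M ^^ Suc n) x) = l2_norm (M ((M ^^ n) x))" by simp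
  also have "\<dots> \<le> q * l2_norm ((M ^^ n) x)"
    by (intro assms(2) bounded_op_is_l2[OF bounded_op_funpow[OF assms(1)] assms(4)])
  also have "\<dots> \<le> q * (q^n * l2_norm x)" by (intro mult_left_mono Suc assms(3))
  finally show ?case by simp
qed

lemma summable_l2_norm_funpow:
  fixes M :: "('i \<Rightarrow> complex) \<Rightarrow> ('i \<Rightarrow> complex)"
  assumes M: "bounded_op M" and contr: "\<And>x. is_l2 x \<Longrightarrow> l2_norm (M x) \<le> q * l2_norm x"
    and q: "0 \<le> q" "q < 1" and x: "is_l2 x"
  shows "summable (\<lambda>n. l2_norm ((M ^^ n) x))" "(\<Sum>n. l2_norm ((M ^^ n) x)) \<le> l2_norm x / (1 - q)"
proof -
  have le: "l2_norm ((M ^^ n) x) \<le> q^n * l2_norm x" for n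
    by (rule l2_norm_funpow_le[OF M contr q(1) x])
  have geom: "summable (\<lambda>n. q^n * l2_norm x)"
    using q by (intro summable_mult2 summable_geometric) simp
  show sm: "summable (\<lambda>n. l2_norm ((M ^^ n) x))"
    by (rule summable_comparison_test[OF _ geom]) (auto simp: le l2_norm_nonneg)
  have "(\<Sum>n. l2_norm ((M ^^ n) x)) \<le> (\<Sum>n. q^n * l2_norm x)"
    by (intro suminf_le sm geom le)
  also have "\<dots> = l2_norm x / (1 - q)"
    using suminf_mult2[OF summable_geometric[of q], of "l2_norm x"] suminf_geometric[of q] q
    by (simp add: mult.commute)
  finally show "(\<Sum>n. l2_norm ((M ^^ n) x)) \<le> l2_norm x / (1 - q)" .
qed

lemma funpow_contraction_telescope:
  fixes M :: "('i \<Rightarrow> complex) \<Rightarrow> ('i \<Rightarrow> complex)"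
  assumes M: "bounded_op M" and contr: "\<And>x. is_l2 x \<Longrightarrow> l2_norm (M x) \<le> q * l2_norm x"
    and q: "0 \<le> q" "q < 1" and x: "is_l2 x"
  shows "(\<lambda>n. (M ^^ n) x i - (M ^^ Suc n) x i) sums x i"
proof -
  have "(\<lambda>n. (M ^^ n) x i) \<longlonglongrightarrow> 0"
  proof (rule Lim_null_comparison)
    show "\<forall>\<^sub>F n in sequentially. norm ((M ^^ n) x i) \<le> q^n * l2_norm x"
      using l2_coord_le_norm[OF bounded_op_is_l2[OF bounded_op_funpow[OF M] x]]
        l2_norm_funpow_le[OF M contr q(1) x] order_trans
      by (intro always_eventually) blast
    show "(\<lambda>n. q^n * l2_norm x) \<longlonglongrightarrow> 0"
      using tendsto_mult[OF LIMSEQ_power_zero[of q] tendsto_const, of "l2_norm x"] q by simp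
  qed
  from telescope_sums'[OF this] show ?thesis by simp
qed

lemma neumann_series_inverse:
  fixes M :: "('i \<Rightarrow> complex) \<Rightarrow> ('i \<Rightarrow> complex)"
  assumes M: "bounded_op M" and contr: "\<And>x. is_l2 x \<Longrightarrow> l2_norm (M x) \<le> q * l2_norm x"
    and q: "0 \<le> q" "q < 1"
  defines "N \<equiv> \<lambda>y i. \<Sum>n. (M ^^ n) y i"
  shows "bounded_op N"
    and "\<And>x. is_l2 x \<Longrightarrow> N (\<lambda>i. x i - M x i) = x"
    and "\<And>y. is_l2 y \<Longrightarrow> (\<lambda>i. N y i - M (N y) i) = y"
proof -
  have P: "bounded_op (M ^^ n)" for n by (rule bounded_op_funpow[OF M])
  have Pl2: "is_l2 ((M ^^ n) x)" if "is_l2 x" for x n by (rule bounded_op_is_l2[OF P that])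
  have sm: "summable (\<lambda>n. l2_norm ((M ^^ n) x))" "(\<Sum>n. l2_norm ((M ^^ n) x)) \<le> l2_norm x / (1 - q)"
    if "is_l2 x" for x
    using summable_l2_norm_funpow[OF M contr q that] by blast+
  have series: "(\<forall>i. summable (\<lambda>n. (M ^^ n) y i)) \<and> is_l2 (N y) \<and>
      l2_norm (N y) \<le> (\<Sum>n. l2_norm ((M ^^ n) y))" if "is_l2 y" for y
    unfolding N_def by (rule l2_series_norm_le[OF Pl2[OF that] sm(1)[OF that]])
  have telescope: "(\<lambda>n. (M ^^ n) x i - (M ^^ Suc n) x i) sums x i" if "is_l2 x" for x i
    by (rule funpow_contraction_telescope[OF M contr q that])
  show "bounded_op N"
  proof (rule bounded_opI[where C="1 / (1 - q)"])
    fix y :: "'i \<Rightarrow> complex" assume y: "is_l2 y"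
    show "is_l2 (N y)" using series[OF y] by blast
    show "l2_norm (N y) \<le> 1 / (1 - q) * l2_norm y"
      using series[OF y] sm(2)[OF y] by simp
  next
    fix x y :: "'i \<Rightarrow> complex" and a b assume x: "is_l2 x" and y: "is_l2 y"
    show "N (\<lambda>i. a * x i + b * y i) = (\<lambda>i. a * N x i + b * N y i)"
      unfolding N_def bounded_op_lin_comb[OF P x y]
      using series[OF x] series[OF y] by (simp add: suminf_add[symmetric] suminf_mult summable_mult)
  qed
  show "N (\<lambda>i. x i - M x i) = x" if x: "is_l2 x" for x
  proof
    fix i
    have "(M ^^ n) (\<lambda>i. x i - M x i) i = (M ^^ n) x i - (M ^^ Suc n) x i" for n
      using bounded_op_diff[OF P x bounded_op_is_l2[OF M x], of n] by (simp add: funpow_swap1)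
    thus "N (\<lambda>i. x i - M x i) i = x i"
      unfolding N_def using sums_unique[OF telescope[OF x]] by simp
  qed
  show "(\<lambda>i. N y i - M (N y) i) = y" if y: "is_l2 y" for y
  proof
    fix i
    have "(\<lambda>n. M ((M ^^ n) y) i) sums M (N y) i"
      unfolding N_def by (rule bounded_op_sums[OF M Pl2[OF y] sm(1)[OF y]])
    hence "(\<lambda>n. (M ^^ n) y i - (M ^^ Suc n) y i) sums (N y i - M (N y) i)"
      using series[OF y] unfolding N_def by (intro sums_diff summable_sums) auto
    thus "N y i - M (N y) i = y i"
      using sums_unique2[OF _ telescope[OF y]] by blast
  qed
qed

lemma self_adjoint_shift_norm_le:
  fixes S :: "('i \<Rightarrow> complex) \<Rightarrow> ('i \<Rightarrow> complex)"
  assumes S: "bounded_op S"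
    and sa: "\<And>x y. is_l2 x \<Longrightarrow> is_l2 y \<Longrightarrow> l2_inner (S x) y = l2_inner x (S y)"
    and lb: "\<And>x. is_l2 x \<Longrightarrow> A * l2_normsq x \<le> Re (l2_inner (S x) x)"
    and ub: "\<And>x. is_l2 x \<Longrightarrow> Re (l2_inner (S x) x) \<le> B * l2_normsq x"
    and A: "A > 0" and AB: "A \<le> B" and x: "is_l2 x"
  defines "c \<equiv> 2 / (A + B)"
  shows "l2_norm (\<lambda>i. x i - complex_of_real c * S x i) \<le> (B - A) / (A + B) * l2_norm x"
proof -
  define q where "q = (B - A) / (A + B)"
  have c0: "c > 0" unfolding c_def using A AB by simp
  have cA: "1 - c * A = q" and cB: "1 - c * B = - q"
    unfolding c_def q_def using A AB by (simp_all add: field_simps)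
  define M where "M = (\<lambda>x i. 1 * x i + (- complex_of_real c) * S x i)"
  have M: "bounded_op M"
    unfolding M_def by (rule bounded_op_lin_comb_op[OF bounded_op_id S])
  have Mx: "l2_inner (M x) y = l2_inner x y - complex_of_real c * l2_inner (S x) y"
    if x: "is_l2 x" and y: "is_l2 y" for x y
    unfolding M_def
      using l2_inner_lin_comb_left[OF x bounded_op_is_l2[OF S x] y, of 1 "- complex_of_real c"]
    by simp
  have M_self_adjoint: "l2_inner (M x) y = l2_inner x (M y)" if x: "is_l2 x"
    and y: "is_l2 y" for x y
  proof -
    have "l2_inner x (M y) = l2_inner x y - complex_of_real c * l2_inner x (S y)"
      unfolding M_def
        using l2_inner_lin_comb_right[OF y bounded_op_is_l2[OF S y] x, of 1 "- complex_of_real c"]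
      by simp
    thus ?thesis using Mx[OF x y] sa[OF x y] by simp
  qed
  have M_numerical_range: "\<bar>Re (l2_inner (M x) x)\<bar> \<le> q * l2_normsq x" if x: "is_l2 x" for x
  proof -
    have e: "Re (l2_inner (M x) x) = l2_normsq x - c * Re (l2_inner (S x) x)"
      using Mx[OF x x] by (simp add: l2_inner_self)
    have "c * (A * l2_normsq x) \<le> c * Re (l2_inner (S x) x)"
      and "c * Re (l2_inner (S x) x) \<le> c * (B * l2_normsq x)"
      using lb[OF x] ub[OF x] c0 by simp_all
    hence "(1 - c * B) * l2_normsq x \<le> Re (l2_inner (M x) x)"
      and "Re (l2_inner (M x) x) \<le> (1 - c * A) * l2_normsq x"
      unfolding e by (simp_all add: algebra_simps)
    thus ?thesis unfolding cA cB by (simp add: abs_le_iff)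
  qed
  have "l2_norm (M x) \<le> q * l2_norm x"
    by (rule self_adjoint_norm_le[OF M M_self_adjoint M_numerical_range x])
  thus ?thesis unfolding M_def q_def by simp
qed

lemma self_adjoint_bounded_below_invertible:
  fixes S :: "('i \<Rightarrow> complex) \<Rightarrow> ('i \<Rightarrow> complex)"
  assumes S: "bounded_op S"
    and sa: "\<And>x y. is_l2 x \<Longrightarrow> is_l2 y \<Longrightarrow> l2_inner (S x) y = l2_inner x (S y)"
    and lb: "\<And>x. is_l2 x \<Longrightarrow> A * l2_normsq x \<le> Re (l2_inner (S x) x)"
    and ub: "\<And>x. is_l2 x \<Longrightarrow> Re (l2_inner (S x) x) \<le> B * l2_normsq x"
    and A: "A > 0"
  shows "\<exists>Si. bounded_op Si \<and> (\<forall>x. is_l2 x \<longrightarrow> Si (S x) = x \<and> S (Si x) = x)"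
proof -
  have AB: "A \<le> B" using lb[of "unit_vec undefined"] ub[of "unit_vec undefined"] by simp
  define c where "c = 2 / (A + B)"
  define q where "q = (B - A) / (A + B)"
  have q: "0 \<le> q" "q < 1" unfolding q_def using A AB by (auto simp: divide_less_eq)
  define M where "M = (\<lambda>x i. 1 * x i + (- complex_of_real c) * S x i)"
  have M: "bounded_op M"
    unfolding M_def by (rule bounded_op_lin_comb_op[OF bounded_op_id S])
  have contr: "l2_norm (M x) \<le> q * l2_norm x" if "is_l2 x" for x
    using self_adjoint_shift_norm_le[OF S sa lb ub A AB that] unfolding M_def c_def q_def by simp
  have SM: "complex_of_real c * S x i = x i - M x i" for x i
    unfolding M_def by simp
  define N where "N = (\<lambda>y i. \<Sum>n. (M ^^ n) y i)"
  have N: "bounded_op N" "\<And>x. is_l2 x \<Longrightarrow> N (\<lambda>i. x i - M x i) = x"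
    "\<And>y. is_l2 y \<Longrightarrow> (\<lambda>i. N y i - M (N y) i) = y"
    unfolding N_def by (rule neumann_series_inverse[OF M contr q]; assumption)+
  \<comment> \<open>\<open>c S = I - M\<close>, so \<open>c N\<close> inverts \<open>S\<close>.\<close>
  define Si where "Si = (\<lambda>y i. complex_of_real c * N y i + 0 * N y i)"
  have "bounded_op Si"
    unfolding Si_def by (rule bounded_op_lin_comb_op[OF N(1) N(1)])
  moreover have "Si (S x) = x" if x: "is_l2 x" for x
  proof -
    have "Si (S x) = N (\<lambda>i. complex_of_real c * S x i)"
      unfolding Si_def using bounded_op_scale[OF N(1) bounded_op_is_l2[OF S x]] by simp
    thus ?thesis unfolding SM by (simp add: N(2)[OF x])
  qed
  moreover have "S (Si y) = y" if y: "is_l2 y" for y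
  proof -
    have "S (Si y) = (\<lambda>i. complex_of_real c * S (N y) i)"
      unfolding Si_def using bounded_op_scale[OF S bounded_op_is_l2[OF N(1) y]] by simp
    thus ?thesis unfolding SM by (simp add: N(3)[OF y])
  qed
  ultimately show ?thesis by blast
qed

section \<open>Bessel sequences, frames and Riesz bases\<close>

definition analysis_op :: "('j \<Rightarrow> 'i \<Rightarrow> complex) \<Rightarrow> ('i \<Rightarrow> complex) \<Rightarrow> ('j \<Rightarrow> complex)" where
  "analysis_op g x = (\<lambda>j. l2_inner x (g j))"

definition synthesis_op :: "('j \<Rightarrow> 'i \<Rightarrow> complex) \<Rightarrow> ('j \<Rightarrow> complex) \<Rightarrow> ('i \<Rightarrow> complex)" where
  "synthesis_op g c = (\<lambda>i. \<Sum>\<^sub>\<infinity>j. c j * g j i)"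

definition bessel_bound :: "('j \<Rightarrow> 'i \<Rightarrow> complex) \<Rightarrow> real \<Rightarrow> bool" where
  "bessel_bound g B \<longleftrightarrow> (\<forall>j. is_l2 (g j)) \<and>
     (\<forall>x. is_l2 x \<longrightarrow> is_l2 (analysis_op g x) \<and> l2_normsq (analysis_op g x) \<le> B * l2_normsq x)"

lemma bessel_on_UNIV_iff: "bessel_on UNIV g \<longleftrightarrow> (\<exists>B. bessel_bound g B)"
  unfolding bessel_on_def bessel_bound_def analysis_op_def is_l2_def l2_normsq_def by auto

lemma frame_on_UNIV_iff:
  "frame_on UNIV f \<longleftrightarrow> (\<exists>B. bessel_bound f B) \<and> (\<exists>A>0. \<forall>x. is_l2 x \<longrightarrow> A * l2_normsq x
      \<le> l2_normsq (analysis_op f x))"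
  unfolding frame_on_def bessel_on_UNIV_iff unfolding analysis_op_def l2_normsq_def by simp

lemma assoc_op_eq_analysis_op: "assoc_op f = analysis_op f"
  unfolding assoc_op_def analysis_op_def by (rule ext) simp

lemma bessel_bound_is_l2: "bessel_bound g B \<Longrightarrow> is_l2 (g j)"
  unfolding bessel_bound_def by blast

lemma is_l2_analysis_op: "bessel_bound g B \<Longrightarrow> is_l2 x \<Longrightarrow> is_l2 (analysis_op g x)"
  unfolding bessel_bound_def by blast

lemma l2_normsq_analysis_op_le: "bessel_bound g B \<Longrightarrow> is_l2 x \<Longrightarrow> l2_normsq (analysis_op g x)
    \<le> B * l2_normsq x"
  unfolding bessel_bound_def by blast

lemma l2_normsq_analysis_op:
  "l2_normsq (analysis_op g x) = infsum (\<lambda>j. (cmod (l2_inner x (g j)))^2) UNIV"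
  unfolding l2_normsq_def analysis_op_def ..

lemma bessel_bound_nonneg: "bessel_bound g B \<Longrightarrow> B \<ge> 0"
  using l2_normsq_analysis_op_le[of g B "unit_vec undefined"]
    l2_normsq_nonneg[of "analysis_op g (unit_vec undefined)"] by simp

lemma l2_norm_analysis_op_le: "bessel_bound g B \<Longrightarrow> is_l2 x \<Longrightarrow> l2_norm (analysis_op g x)
    \<le> sqrt B * l2_norm x"
  unfolding l2_norm_def using l2_normsq_analysis_op_le[of g B x]
  by (metis real_sqrt_le_mono real_sqrt_mult)

lemma analysis_op_lin_comb:
  assumes "\<And>j. is_l2 (g j)" "is_l2 x" "is_l2 y"
  shows "analysis_op g (\<lambda>i. a * x i + b * y i) = (\<lambda>j. a * analysis_op g x j
      + b * analysis_op g y j)"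
  unfolding analysis_op_def using l2_inner_lin_comb_left[OF assms(2,3) assms(1)] by simp

lemma analysis_op_sum:
  fixes r :: nat
  assumes "\<And>k. k < r \<Longrightarrow> is_l2 (g k j)" and "is_l2 x"
  shows "analysis_op (\<lambda>j i. \<Sum>k<r. g k j i) x j = (\<Sum>k<r. analysis_op (g k) x j)"
proof -
  have "l2_inner x (\<lambda>i. \<Sum>k<r. 1 * g k j i) = (\<Sum>k<r. cnj 1 * l2_inner x (g k j))"
    by (rule l2_inner_sum_right) (use assms in auto)
  thus ?thesis unfolding analysis_op_def by simp
qed

lemma bounded_op_analysis_op: "bessel_bound g B \<Longrightarrow> bounded_op (analysis_op g)"
  by (rule bounded_opI[where C="sqrt B"])
    (auto intro: is_l2_analysis_op l2_norm_analysis_op_le analysis_op_lin_comb bessel_bound_is_l2)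

lemma bessel_bound_zero: "bessel_bound (\<lambda>n i. 0) 0"
  unfolding bessel_bound_def analysis_op_def by simp

lemma bessel_bound_lin_comb:
  assumes b1: "bessel_bound g B1" and b2: "bessel_bound g' B2"
  shows "bessel_bound (\<lambda>n i. \<alpha> * g n i + \<beta> * g' n i) (2 * (cmod \<alpha>)^2 * B1 + 2 * (cmod \<beta>)^2 * B2)"
  unfolding bessel_bound_def
proof (intro conjI allI impI)
  show "is_l2 (\<lambda>i. \<alpha> * g n i + \<beta> * g' n i)" for n
    by (intro is_l2_lin_comb bessel_bound_is_l2[OF b1] bessel_bound_is_l2[OF b2])
  fix y :: "'b \<Rightarrow> complex" assume y: "is_l2 y"
  have e: "analysis_op (\<lambda>n i. \<alpha> * g n i + \<beta> * g' n i) y = (\<lambda>n. cnj \<alpha> * analysis_op g y n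
      + cnj \<beta> * analysis_op g' y n)"
    unfolding analysis_op_def
      using l2_inner_lin_comb_right[OF bessel_bound_is_l2[OF b1] bessel_bound_is_l2[OF b2] y]
        by simp
  have a1: "is_l2 (analysis_op g y)" "is_l2 (analysis_op g' y)" using is_l2_analysis_op b1 b2 y
    by blast+
  show "is_l2 (analysis_op (\<lambda>n i. \<alpha> * g n i + \<beta> * g' n i) y)" unfolding e
    by (intro is_l2_lin_comb a1)
  have s: "(\<lambda>n. 2 * (cmod (cnj \<alpha>))^2 * (cmod (analysis_op g y n))^2
      + 2 * (cmod (cnj \<beta>))^2 * (cmod (analysis_op g' y n))^2) summable_on UNIV"
    using a1 unfolding is_l2_def by (intro summable_on_add summable_on_cmult_right) auto
  have "l2_normsq (analysis_op (\<lambda>n i. \<alpha> * g n i + \<beta> * g' n i) y)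
      \<le> infsum (\<lambda>n. 2 * (cmod (cnj \<alpha>))^2 * (cmod (analysis_op g y n))^2
        + 2 * (cmod (cnj \<beta>))^2 * (cmod (analysis_op g' y n))^2) UNIV"
    unfolding e l2_normsq_def
    by (rule infsum_mono[OF _ s cmod_lin_comb_power2_le])
      (use is_l2_lin_comb[OF a1] in \<open>simp add: is_l2_def\<close>)
  also have "\<dots> = 2 * (cmod \<alpha>)^2 * l2_normsq (analysis_op g y)
      + 2 * (cmod \<beta>)^2 * l2_normsq (analysis_op g' y)"
    unfolding l2_normsq_def using a1 unfolding is_l2_def
    by (subst infsum_add) (auto intro: summable_on_cmult_right simp: infsum_cmult_right)
  also have "\<dots> \<le> 2 * (cmod \<alpha>)^2 * (B1 * l2_normsq y) + 2 * (cmod \<beta>)^2 * (B2 * l2_normsq y)"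
    by (intro add_mono mult_left_mono l2_normsq_analysis_op_le[OF b1 y]
      l2_normsq_analysis_op_le[OF b2 y]) auto
  finally show "l2_normsq (analysis_op (\<lambda>n i. \<alpha> * g n i + \<beta> * g' n i) y)
      \<le> (2 * (cmod \<alpha>)^2 * B1 + 2 * (cmod \<beta>)^2 * B2) * l2_normsq y"
    by (simp add: algebra_simps)
qed

lemma bessel_bound_sum:
  fixes g :: "nat \<Rightarrow> 'j \<Rightarrow> 'i \<Rightarrow> complex"
  assumes g: "\<And>k. k < r \<Longrightarrow> bessel_bound (g k) (B k)"
  shows "bessel_bound (\<lambda>j i. \<Sum>k<r. g k j i) (real r * (\<Sum>k<r. B k))"
  unfolding bessel_bound_def
proof (intro conjI allI impI)
  show "is_l2 (\<lambda>i. \<Sum>k<r. g k j i)" for j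
    using g by (intro is_l2_sum) (auto intro: bessel_bound_is_l2)
  fix x :: "'i \<Rightarrow> complex" assume x: "is_l2 x"
  have sum: "analysis_op (\<lambda>j i. \<Sum>k<r. g k j i) x = (\<lambda>j. \<Sum>k<r. analysis_op (g k) x j)"
    using analysis_op_sum[of r g _ x] bessel_bound_is_l2[OF g] x by auto
  show "is_l2 (analysis_op (\<lambda>j i. \<Sum>k<r. g k j i) x)"
    unfolding sum using is_l2_analysis_op[OF g x] by (intro is_l2_sum) auto
  have "l2_normsq (analysis_op (\<lambda>j i. \<Sum>k<r. g k j i) x)
      \<le> real r * (\<Sum>k<r. l2_normsq (analysis_op (g k) x))"
    unfolding sum using is_l2_analysis_op[OF g x] by (intro l2_normsq_sum_le)
  also have "\<dots> \<le> real r * (\<Sum>k<r. B k * l2_normsq x)"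
    using l2_normsq_analysis_op_le[OF g x] by (intro mult_left_mono sum_mono) auto
  finally show "l2_normsq (analysis_op (\<lambda>j i. \<Sum>k<r. g k j i) x)
      \<le> real r * (\<Sum>k<r. B k) * l2_normsq x"
    by (simp add: sum_distrib_right mult.assoc)
qed

lemma bessel_bound_column_is_l2: "bessel_bound g B \<Longrightarrow> is_l2 (\<lambda>j. g j i)"
proof -
  assume b: "bessel_bound g B"
  have "is_l2 (analysis_op g (unit_vec i))" by (rule is_l2_analysis_op[OF b is_l2_unit_vec])
  hence "is_l2 (\<lambda>j. cnj (analysis_op g (unit_vec i) j))" by (rule is_l2_cnj)
  thus ?thesis unfolding analysis_op_def by (simp add: l2_inner_unit_vec_left)
qed

lemma synthesis_op_summable: "bessel_bound g B \<Longrightarrow> is_l2 c \<Longrightarrow> (\<lambda>j. c j * g j i) summable_on UNIV"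
  using l2_inner_summable[of c "\<lambda>j. cnj (g j i)"] is_l2_cnj[OF bessel_bound_column_is_l2[of g B i]]
    by simp

lemma synthesis_op_inner_zero_outside:
  assumes b: "bessel_bound g B" and c: "is_l2 c" and F: "finite F"
  shows "l2_inner (synthesis_op g c) (zero_outside F y)
      = l2_inner c (analysis_op g (zero_outside F y))"
proof -
  have "l2_inner (synthesis_op g c) (zero_outside F y) = (\<Sum>i\<in>F. (\<Sum>\<^sub>\<infinity>j. c j * g j i) * cnj (y i))"
    unfolding l2_inner_zero_outside_right[OF F] synthesis_op_def ..
  also have "\<dots> = (\<Sum>i\<in>F. \<Sum>\<^sub>\<infinity>j. c j * g j i * cnj (y i))"
    by (intro sum.cong refl infsum_cmult_left[symmetric] synthesis_op_summable[OF b c])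
  also have "\<dots> = (\<Sum>\<^sub>\<infinity>j. \<Sum>i\<in>F. c j * g j i * cnj (y i))"
    by (intro infsum_sum[symmetric] F summable_on_cmult_left synthesis_op_summable[OF b c])
  also have "\<dots> = l2_inner c (analysis_op g (zero_outside F y))"
    unfolding l2_inner_def[of c] analysis_op_def
  proof (rule infsum_cong)
    fix j
    have "l2_inner (zero_outside F y) (g j) = (\<Sum>i\<in>F. y i * cnj (g j i))"
      by (rule l2_inner_zero_outside_left[OF F])
    thus "(\<Sum>i\<in>F. c j * g j i * cnj (y i)) = c j * cnj (l2_inner (zero_outside F y) (g j))"
      by (simp add: cnj_sum sum_distrib_left mult.commute mult.left_commute)
  qed
  finally show ?thesis .
qed

lemma is_l2_synthesis_op:
  assumes b: "bessel_bound g B" and c: "is_l2 c"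
  shows "is_l2 (synthesis_op g c)"
  by (rule l2_inner_representer(1)[OF bounded_op_analysis_op[OF b] c])
    (rule synthesis_op_inner_zero_outside[OF b c])

lemma synthesis_op_adjoint:
  assumes b: "bessel_bound g B" and c: "is_l2 c" and y: "is_l2 y"
  shows "l2_inner (synthesis_op g c) y = l2_inner c (analysis_op g y)"
  by (rule l2_inner_representer(2)[OF bounded_op_analysis_op[OF b] c _ y])
    (rule synthesis_op_inner_zero_outside[OF b c])

lemma l2_norm_synthesis_op_le:
  assumes b: "bessel_bound g B" and c: "is_l2 c"
  shows "l2_norm (synthesis_op g c) \<le> sqrt B * l2_norm c"
proof -
  let ?s = "synthesis_op g c"
  have s: "is_l2 ?s" by (rule is_l2_synthesis_op[OF b c])
  have "(l2_norm ?s)^2 = Re (l2_inner c (analysis_op g ?s))"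
    using synthesis_op_adjoint[OF b c s] by (simp add: l2_norm_power2 l2_normsq_eq_Re_inner)
  also have "\<dots> \<le> l2_norm c * l2_norm (analysis_op g ?s)"
    using l2_Cauchy_Schwarz[OF c is_l2_analysis_op[OF b s]] complex_Re_le_cmod order_trans by blast
  also have "\<dots> \<le> l2_norm c * (sqrt B * l2_norm ?s)"
    by (intro mult_left_mono l2_norm_analysis_op_le[OF b s] l2_norm_nonneg)
  finally have "l2_norm ?s * l2_norm ?s \<le> (sqrt B * l2_norm c) * l2_norm ?s"
    by (simp add: power2_eq_square algebra_simps)
  thus ?thesis using l2_norm_nonneg[of ?s] l2_norm_nonneg[of c] bessel_bound_nonneg[OF b]
    by (cases "l2_norm ?s = 0") (auto simp: mult_le_cancel_right)
qed

lemma synthesis_op_lin_comb: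
  assumes b: "bessel_bound g B" and c: "is_l2 c" and d: "is_l2 d"
  shows "synthesis_op g (\<lambda>j. a * c j + e * d j) = (\<lambda>i. a * synthesis_op g c i
      + e * synthesis_op g d i)"
proof
  fix i
  have "(\<Sum>\<^sub>\<infinity>j. (a * c j + e * d j) * g j i) = (\<Sum>\<^sub>\<infinity>j. a * (c j * g j i) + e * (d j * g j i))"
    by (simp add: algebra_simps)
  also have "\<dots> = (\<Sum>\<^sub>\<infinity>j. a * (c j * g j i)) + (\<Sum>\<^sub>\<infinity>j. e * (d j * g j i))"
    by (intro infsum_add summable_on_cmult_right synthesis_op_summable[OF b c]
      synthesis_op_summable[OF b d])
  also have "\<dots> = a * synthesis_op g c i + e * synthesis_op g d i"
    unfolding synthesis_op_def
    using infsum_cmult_right[OF synthesis_op_summable[OF b c], of a i]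
      infsum_cmult_right[OF synthesis_op_summable[OF b d], of e i]
    by simp
  finally show "synthesis_op g (\<lambda>j. a * c j + e * d j) i = a * synthesis_op g c i
      + e * synthesis_op g d i"
    unfolding synthesis_op_def by simp
qed

lemma bounded_op_synthesis_op: "bessel_bound g B \<Longrightarrow> bounded_op (synthesis_op g)"
  by (rule bounded_opI)
    (auto intro: is_l2_synthesis_op synthesis_op_lin_comb l2_norm_synthesis_op_le)

lemma frame_operator_invertible:
  assumes b: "bessel_bound g B" and A: "A > 0"
    and lb: "\<And>x. is_l2 x \<Longrightarrow> A * l2_normsq x \<le> l2_normsq (analysis_op g x)"
  shows "\<exists>Si. bounded_op Si \<and> (\<forall>x. is_l2 x \<longrightarrow> Si (synthesis_op g (analysis_op g x))
      = x \<and> synthesis_op g (analysis_op g (Si x)) = x)"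
proof (rule self_adjoint_bounded_below_invertible)
  show "bounded_op (\<lambda>x. synthesis_op g (analysis_op g x))"
    by (rule bounded_op_comp[OF bounded_op_synthesis_op[OF b] bounded_op_analysis_op[OF b]])
  have e: "l2_inner (synthesis_op g (analysis_op g x)) y
      = l2_inner (analysis_op g x) (analysis_op g y)" if "is_l2 x" "is_l2 y" for x y
    by (intro synthesis_op_adjoint[OF b] is_l2_analysis_op[OF b] that)
  fix x y :: "'b \<Rightarrow> complex"
  assume x: "is_l2 x"
  show "A * l2_normsq x \<le> Re (l2_inner (synthesis_op g (analysis_op g x)) x)"
    unfolding e[OF x x] by (simp add: l2_inner_self lb[OF x])
  show "Re (l2_inner (synthesis_op g (analysis_op g x)) x) \<le> B * l2_normsq x"
    unfolding e[OF x x] by (simp add: l2_inner_self l2_normsq_analysis_op_le[OF b x])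
  assume y: "is_l2 y"
  show "l2_inner (synthesis_op g (analysis_op g x)) y
      = l2_inner x (synthesis_op g (analysis_op g y))"
    unfolding e[OF x y] l2_inner_commute[of x] e[OF y x] l2_inner_commute[of "analysis_op g y"]
      by simp
qed (rule A)

lemma frame_analysis_op_left_inverse:
  assumes b: "bessel_bound g B" and A: "A > 0"
    and lb: "\<And>x. is_l2 x \<Longrightarrow> A * l2_normsq x \<le> l2_normsq (analysis_op g x)"
  shows "\<exists>L. bounded_op L \<and> (\<forall>x. is_l2 x \<longrightarrow> L (analysis_op g x) = x)"
proof -
  obtain Si where Si: "bounded_op Si" "\<And>x. is_l2 x \<Longrightarrow> Si (synthesis_op g (analysis_op g x)) = x"
    using frame_operator_invertible[OF b A lb] by blast
  show ?thesis
    by (rule exI[where x="\<lambda>c. Si (synthesis_op g c)"])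
      (simp add: bounded_op_comp[OF Si(1) bounded_op_synthesis_op[OF b]] Si(2))
qed

lemma frame_analysis_op_right_inverse:
  assumes b: "bessel_bound g B" and A: "A > 0"
    and lb: "\<And>x. is_l2 x \<Longrightarrow> A * l2_normsq x \<le> l2_normsq (analysis_op g x)"
    and inj: "\<And>c. is_l2 c \<Longrightarrow> synthesis_op g c = (\<lambda>i. 0) \<Longrightarrow> c = (\<lambda>j. 0)"
  shows "\<exists>V. bounded_op V \<and> (\<forall>c. is_l2 c \<longrightarrow> analysis_op g (V c) = c)"
proof -
  obtain Si where Si: "bounded_op Si" "\<And>x. is_l2 x \<Longrightarrow> synthesis_op g (analysis_op g (Si x)) = x"
    using frame_operator_invertible[OF b A lb] by blast
  have "analysis_op g (Si (synthesis_op g c)) = c" if c: "is_l2 c" for c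
  proof -
    have sc: "is_l2 (synthesis_op g c)" by (rule is_l2_synthesis_op[OF b c])
    have l: "is_l2 (analysis_op g (Si (synthesis_op g c)))"
      by (rule is_l2_analysis_op[OF b bounded_op_is_l2[OF Si(1) sc]])
    have "synthesis_op g (\<lambda>j. analysis_op g (Si (synthesis_op g c)) j - c j)
        = (\<lambda>i. synthesis_op g (analysis_op g (Si (synthesis_op g c))) i - synthesis_op g c i)"
      using synthesis_op_lin_comb[OF b l c, where a=1 and e="-1"] by simp
    also have "\<dots> = (\<lambda>i. 0)" unfolding Si(2)[OF sc] by simp
    finally have "(\<lambda>j. analysis_op g (Si (synthesis_op g c)) j - c j) = (\<lambda>j. 0)"
      by (rule inj[OF is_l2_diff[OF l c]])
    thus ?thesis by (simp add: fun_eq_iff)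
  qed
  thus ?thesis
    by (intro exI[where x="\<lambda>c. Si (synthesis_op g c)"])
      (simp add: bounded_op_comp[OF Si(1) bounded_op_synthesis_op[OF b]])
qed

lemma riesz_basis_synthesis_op_inj:
  assumes R: "riesz_basis_on UNIV f" and b: "bessel_bound f B" and c: "is_l2 c"
    and z: "synthesis_op f c = (\<lambda>i. 0)"
  shows "c = (\<lambda>j. 0)"
proof
  fix j0
  obtain u T where u: "orthonormal_basis_on UNIV u" and T: "bounded_invertible_op T"
    and fT: "\<And>j. f j = T (u j)"
    using R unfolding riesz_basis_on_def by blast
  obtain S0 where S0: "bounded_op S0" "\<And>x. is_l2 x \<Longrightarrow> S0 (T x) = x"
    using T unfolding bounded_invertible_op_def by blast
  have ul2: "is_l2 (u j)" for j using u unfolding orthonormal_basis_on_def by blast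
  have uo: "l2_inner (u j) (u j') = (if j = j' then 1 else 0)" for j j'
    using u unfolding orthonormal_basis_on_def by blast
  \<comment> \<open>The vector \<open>y = S0\<^sup>* (u j0)\<close> is biorthogonal to \<open>f\<close>, so it picks out \<open>c j0\<close>.\<close>
  obtain y where y: "is_l2 y" "\<And>v. is_l2 v \<Longrightarrow> l2_inner y v = l2_inner (u j0) (S0 v)"
    using bounded_op_adjoint_vector[OF S0(1) ul2[of j0]] by blast
  have Tl2: "is_l2 (T (u j))" for j using T ul2 unfolding bounded_invertible_op_def bounded_op_def
    by blast
  have yf: "l2_inner y (f j) = (if j0 = j then 1 else 0)" for j
    unfolding fT y(2)[OF Tl2] S0(2)[OF ul2] uo ..
  have "0 = l2_inner (synthesis_op f c) y" unfolding z by simp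
  also have "\<dots> = l2_inner c (analysis_op f y)" by (rule synthesis_op_adjoint[OF b c y(1)])
  also have "\<dots> = (\<Sum>\<^sub>\<infinity>j. c j * (if j0 = j then 1 else 0))"
    unfolding analysis_op_def yf l2_inner_def[of c] by (rule infsum_cong) simp
  also have "\<dots> = c j0"
    by (subst infsum_cong_neutral[where T="{j0}" and g="\<lambda>_. c j0"]) auto
  finally show "c j0 = 0" by simp
qed

lemma riesz_basis_analysis_op_right_inverse:
  assumes R: "riesz_basis_on UNIV f"
  shows "\<exists>V. bounded_op V \<and> (\<forall>c. is_l2 c \<longrightarrow> analysis_op f (V c) = c)"
proof -
  have F: "frame_on UNIV f" using R unfolding riesz_basis_on_def by blast
  obtain B A where b: "bessel_bound f B" and A: "A > 0" and lb: "\<And>x. is_l2 x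
      \<Longrightarrow> A * l2_normsq x \<le> l2_normsq (analysis_op f x)"
    using F unfolding frame_on_UNIV_iff by blast
  show ?thesis
    by (rule frame_analysis_op_right_inverse[OF b A lb riesz_basis_synthesis_op_inj[OF R b]])
qed

section \<open>Tensor products of square-summable sequences\<close>

definition tensor :: "('a \<Rightarrow> complex) \<Rightarrow> ('b \<Rightarrow> complex) \<Rightarrow> ('a \<times> 'b \<Rightarrow> complex)" where
  "tensor a b = (\<lambda>(i, i'). a i * b i')"

definition slice :: "('a \<times> 'b \<Rightarrow> complex) \<Rightarrow> 'a \<Rightarrow> 'b \<Rightarrow> complex" where
  "slice z i = (\<lambda>i'. z (i, i'))"

definition contract :: "('a \<times> 'b \<Rightarrow> complex) \<Rightarrow> ('b \<Rightarrow> complex) \<Rightarrow> 'a \<Rightarrow> complex" where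
  "contract z b = (\<lambda>i. l2_inner (slice z i) b)"

lemma tensor_l2:
  assumes a: "is_l2 a" and b: "is_l2 b"
  shows "is_l2 (tensor a b) \<and> l2_normsq (tensor a b) = l2_normsq a * l2_normsq b"
proof -
  let ?f = "\<lambda>p. (cmod (tensor a b p))^2"
  have e: "?f (i, i') = (cmod (a i))^2 * (cmod (b i'))^2" for i i'
    unfolding tensor_def by (simp add: norm_mult power_mult_distrib)
  have in1: "infsum (\<lambda>i'. ?f (i, i')) UNIV = (cmod (a i))^2 * l2_normsq b" for i
    unfolding e l2_normsq_def by (rule infsum_cmult_right) (use b in \<open>simp add: is_l2_def\<close>)
  have F: "?f summable_on UNIV \<and> infsum ?f UNIV = infsum (\<lambda>i. infsum (\<lambda>i'. ?f (i, i')) UNIV) UNIV"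
  proof (rule nonneg_infsum_pair)
    show "(\<lambda>i'. ?f (i, i')) summable_on UNIV" for i
      unfolding e by (rule summable_on_cmult_right) (use b in \<open>simp add: is_l2_def\<close>)
    show "(\<lambda>i. infsum (\<lambda>i'. ?f (i, i')) UNIV) summable_on UNIV"
      unfolding in1 by (rule summable_on_cmult_left) (use a in \<open>simp add: is_l2_def\<close>)
  qed simp
  have "infsum (\<lambda>i. infsum (\<lambda>i'. ?f (i, i')) UNIV) UNIV = l2_normsq a * l2_normsq b"
    unfolding in1 l2_normsq_def by (rule infsum_cmult_left) (use a in \<open>simp add: is_l2_def\<close>)
  thus ?thesis using F unfolding is_l2_def l2_normsq_def[of "tensor a b"] by simp
qed

lemma is_l2_tensor: "is_l2 a \<Longrightarrow> is_l2 b \<Longrightarrow> is_l2 (tensor a b)"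
  using tensor_l2 by blast

lemma slice_l2:
  assumes z: "is_l2 z"
  shows "is_l2 (slice z i) \<and> (\<lambda>i. l2_normsq (slice z i)) summable_on UNIV \<and>
    infsum (\<lambda>i. l2_normsq (slice z i)) UNIV = l2_normsq z"
  using summable_on_pairD[of "\<lambda>p. (cmod (z p))^2"] z
  unfolding is_l2_def l2_normsq_def slice_def by simp

lemma contract_l2:
  assumes z: "is_l2 z" and b: "is_l2 b"
  shows "is_l2 (contract z b) \<and> l2_normsq (contract z b) \<le> l2_normsq z * l2_normsq b"
proof -
  have le: "(cmod (contract z b i))^2 \<le> l2_normsq (slice z i) * l2_normsq b" for i
    unfolding contract_def using l2_Cauchy_Schwarz_power2 slice_l2[OF z] b by blast
  have s: "(\<lambda>i. l2_normsq (slice z i) * l2_normsq b) summable_on UNIV"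
    using slice_l2[OF z] by (intro summable_on_cmult_left) blast
  have l: "is_l2 (contract z b)" unfolding is_l2_def
    by (rule summable_on_comparison_test[OF s le]) simp
  have "l2_normsq (contract z b) \<le> infsum (\<lambda>i. l2_normsq (slice z i) * l2_normsq b) UNIV"
    unfolding l2_normsq_def[of "contract z b"] using l s le unfolding is_l2_def
      by (intro infsum_mono) auto
  also have "\<dots> = l2_normsq z * l2_normsq b"
    using slice_l2[OF z] by (subst infsum_cmult_left) auto
  finally show ?thesis using l by blast
qed

lemma l2_inner_tensor_right:
  assumes z: "is_l2 z" and a: "is_l2 a" and b: "is_l2 b"
  shows "l2_inner z (tensor a b) = l2_inner (contract z b) a"
proof -
  have t: "is_l2 (tensor a b)" using tensor_l2[OF a b] by blast
  have s: "(\<lambda>p. z p * cnj (tensor a b p)) summable_on UNIV" by (rule l2_inner_summable[OF z t])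
  have "l2_inner z (tensor a b) = infsum (\<lambda>p. z p * cnj (tensor a b p)) (Sigma UNIV (\<lambda>_. UNIV))"
    unfolding l2_inner_def by simp
  also have "\<dots> = infsum (\<lambda>i. infsum (\<lambda>i'. z (i, i') * cnj (tensor a b (i, i'))) UNIV) UNIV"
    by (rule infsum_Sigma_banach[symmetric]) (use s in simp)
  also have "\<dots> = infsum (\<lambda>i. contract z b i * cnj (a i)) UNIV"
  proof (rule infsum_cong)
    fix i
    have "infsum (\<lambda>i'. z (i, i') * cnj (tensor a b (i, i'))) UNIV
        = infsum (\<lambda>i'. (z (i, i') * cnj (b i')) * cnj (a i)) UNIV"
      unfolding tensor_def by (simp add: algebra_simps)
    also have "\<dots> = infsum (\<lambda>i'. z (i, i') * cnj (b i')) UNIV * cnj (a i)"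
      by (rule infsum_cmult_left)
        (use l2_inner_summable[OF conjunct1[OF slice_l2[OF z, of i]] b] in \<open>simp add: slice_def\<close>)
    finally show "infsum (\<lambda>i'. z (i, i') * cnj (tensor a b (i, i'))) UNIV
        = contract z b i * cnj (a i)"
      unfolding contract_def l2_inner_def slice_def .
  qed
  finally show ?thesis unfolding l2_inner_def[of "contract z b"] .
qed

lemma l2_inner_tensor_tensor:
  assumes "is_l2 x" "is_l2 y" "is_l2 a" "is_l2 b"
  shows "l2_inner (tensor x y) (tensor a b) = l2_inner x a * l2_inner y b"
proof -
  have c: "contract (tensor x y) b = (\<lambda>i. l2_inner y b * x i)"
  proof
    fix i
    have "slice (tensor x y) i = (\<lambda>i'. x i * y i' + 0 * y i')" unfolding slice_def tensor_def
      by simp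
    thus "contract (tensor x y) b i = l2_inner y b * x i"
      unfolding contract_def using l2_inner_lin_comb_left[OF assms(2) assms(2) assms(4), of "x i" 0]
        by simp
  qed
  show ?thesis
    unfolding l2_inner_tensor_right[OF conjunct1[OF tensor_l2[OF assms(1,2)]] assms(3,4)] c
    using l2_inner_lin_comb_left[OF assms(1) assms(1) assms(3), of "l2_inner y b" 0]
      by (simp add: mult.commute)
qed

lemma bounded_op_contract:
  fixes b :: "'b \<Rightarrow> complex"
  assumes b: "is_l2 b"
  shows "bounded_op (\<lambda>z. contract z b)"
proof (rule bounded_opI[where C="l2_norm b"])
  fix z :: "'a \<times> 'b \<Rightarrow> complex" assume z: "is_l2 z"
  show "is_l2 (contract z b)" using contract_l2[OF z b] by blast
  have "l2_normsq (contract z b) \<le> (l2_norm b * l2_norm z)^2"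
    using contract_l2[OF z b] by (simp add: power_mult_distrib l2_norm_power2 mult.commute)
  thus "l2_norm (contract z b) \<le> l2_norm b * l2_norm z" unfolding l2_norm_def[of "contract z b"]
    by (rule real_le_lsqrt[OF mult_nonneg_nonneg[OF l2_norm_nonneg l2_norm_nonneg]])
next
  fix x y :: "'a \<times> 'b \<Rightarrow> complex" and a c assume x: "is_l2 x" and y: "is_l2 y"
  show "contract (\<lambda>i. a * x i + c * y i) b = (\<lambda>i. a * contract x b i + c * contract y b i)"
  proof
    fix i
    have "slice (\<lambda>i. a * x i + c * y i) i = (\<lambda>i'. a * slice x i i' + c * slice y i i')"
      unfolding slice_def by simp
    thus "contract (\<lambda>i. a * x i + c * y i) b i = a * contract x b i + c * contract y b i"
      unfolding contract_def
        using l2_inner_lin_comb_left[OF conjunct1[OF slice_l2[OF x]] conjunct1[OF slice_l2[OF y]] b]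
          by simp
  qed
qed

lemma bounded_op_tensor_right:
  fixes b :: "'b \<Rightarrow> complex"
  assumes b: "is_l2 b"
  shows "bounded_op (\<lambda>v. tensor v b)"
proof (rule bounded_opI[where C="l2_norm b"])
  fix x :: "'a \<Rightarrow> complex" assume x: "is_l2 x"
  show "is_l2 (tensor x b)" by (rule is_l2_tensor[OF x b])
  show "l2_norm (tensor x b) \<le> l2_norm b * l2_norm x"
    using tensor_l2[OF x b] by (simp add: l2_norm_def real_sqrt_mult)
next
  fix x y :: "'a \<Rightarrow> complex" and \<alpha> \<beta>
  show "tensor (\<lambda>i. \<alpha> * x i + \<beta> * y i) b = (\<lambda>i. \<alpha> * tensor x b i + \<beta> * tensor y b i)"
    unfolding tensor_def by (auto simp: algebra_simps)
qed

lemma contract_bessel: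
  assumes b: "bessel_bound b B" and z: "is_l2 z"
  shows "(\<lambda>n. l2_normsq (contract z (b n))) summable_on UNIV"
    and "infsum (\<lambda>n. l2_normsq (contract z (b n))) UNIV \<le> B * l2_normsq z"
proof -
  have slice: "is_l2 (slice z i)" for i using slice_l2[OF z] by blast
  define h where "h = (\<lambda>p. (cmod (l2_inner (slice z (fst p)) (b (snd p))))^2)"
  have rows: "(\<lambda>n. h (i, n)) summable_on UNIV" for i
    using is_l2_analysis_op[OF b slice] unfolding h_def is_l2_def analysis_op_def by simp
  have rows_le: "infsum (\<lambda>n. h (i, n)) UNIV \<le> B * l2_normsq (slice z i)" for i
    using l2_normsq_analysis_op_le[OF b slice] unfolding l2_normsq_analysis_op h_def by simp
  have h: "h summable_on UNIV" "infsum h UNIV \<le> B * infsum (\<lambda>i. l2_normsq (slice z i)) UNIV"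
    using slice_l2[OF z] by (intro nonneg_infsum_pair_le[OF _ rows rows_le]; simp add: h_def)+
  have columns: "infsum (\<lambda>i. h (i, n)) UNIV = l2_normsq (contract z (b n))" for n
    unfolding h_def l2_normsq_def contract_def by simp
  show "(\<lambda>n. l2_normsq (contract z (b n))) summable_on UNIV"
    using summable_on_columnsD(1)[OF h(1)] unfolding columns .
  show "infsum (\<lambda>n. l2_normsq (contract z (b n))) UNIV \<le> B * l2_normsq z"
    using summable_on_columnsD(2)[OF h(1)] h(2) slice_l2[OF z] unfolding columns by simp
qed

lemma bessel_bound_tensor:
  fixes a :: "'m \<Rightarrow> 'a \<Rightarrow> complex" and b :: "'n \<Rightarrow> 'b \<Rightarrow> complex"
  assumes a: "bessel_bound a A" and b: "bessel_bound b B"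
  shows "bessel_bound (\<lambda>p. tensor (a (fst p)) (b (snd p))) (A * B)"
  unfolding bessel_bound_def
proof (intro conjI allI impI)
  show "is_l2 (tensor (a (fst p)) (b (snd p)))" for p
    by (intro is_l2_tensor bessel_bound_is_l2[OF a] bessel_bound_is_l2[OF b])
  fix z :: "'a \<times> 'b \<Rightarrow> complex" assume z: "is_l2 z"
  have contr: "is_l2 (contract z (b n))" for n using contract_l2[OF z bessel_bound_is_l2[OF b]]
    by blast
  define h where "h = (\<lambda>p. (cmod (l2_inner (contract z (b (fst p))) (a (snd p))))^2)"
  have h_swap: "(cmod (analysis_op (\<lambda>p. tensor (a (fst p)) (b (snd p))) z p))^2
      = h (prod.swap p)" for p
    unfolding h_def analysis_op_def
    using l2_inner_tensor_right[OF z bessel_bound_is_l2[OF a] bessel_bound_is_l2[OF b]] by simp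
  have rows: "(\<lambda>m. h (n, m)) summable_on UNIV" for n
    using is_l2_analysis_op[OF a contr] unfolding h_def is_l2_def analysis_op_def by simp
  have rows_le: "infsum (\<lambda>m. h (n, m)) UNIV \<le> A * l2_normsq (contract z (b n))" for n
    using l2_normsq_analysis_op_le[OF a contr] unfolding l2_normsq_analysis_op h_def by simp
  have h: "h summable_on UNIV" "infsum h UNIV \<le> A * infsum (\<lambda>n. l2_normsq (contract z (b n))) UNIV"
    using contract_bessel[OF b z]
      by (intro nonneg_infsum_pair_le[OF _ rows rows_le]; simp add: h_def)+
  show "is_l2 (analysis_op (\<lambda>p. tensor (a (fst p)) (b (snd p))) z)"
    unfolding is_l2_def h_swap using h(1) summable_on_UNIV_swap by blast
  have "l2_normsq (analysis_op (\<lambda>p. tensor (a (fst p)) (b (snd p))) z) = infsum h UNIV"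
    unfolding l2_normsq_def h_swap by (rule infsum_UNIV_swap[symmetric])
  also have "\<dots> \<le> A * (B * l2_normsq z)"
    using h(2) contract_bessel(2)[OF b z] bessel_bound_nonneg[OF a]
      by (meson mult_left_mono order_trans)
  finally show "l2_normsq (analysis_op (\<lambda>p. tensor (a (fst p)) (b (snd p))) z)
      \<le> A * B * l2_normsq z"
    by (simp add: mult.assoc)
qed

definition swap_coords :: "('a \<times> 'b \<Rightarrow> complex) \<Rightarrow> ('b \<times> 'a \<Rightarrow> complex)" where
  "swap_coords z = (\<lambda>p. z (prod.swap p))"

lemma swap_coords_swap_coords[simp]: "swap_coords (swap_coords z) = z"
  unfolding swap_coords_def by simp

lemma is_l2_swap_coords: "is_l2 (swap_coords z) \<longleftrightarrow> is_l2 z"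
  unfolding is_l2_def swap_coords_def using summable_on_UNIV_swap[of "\<lambda>p. (cmod (z p))^2"] by simp

lemma l2_normsq_swap_coords: "l2_normsq (swap_coords z) = l2_normsq z"
  unfolding l2_normsq_def swap_coords_def using infsum_UNIV_swap[of "\<lambda>p. (cmod (z p))^2"] by simp

lemma l2_inner_swap_coords: "l2_inner (swap_coords z) (swap_coords w) = l2_inner z w"
  unfolding l2_inner_def swap_coords_def using infsum_UNIV_swap[of "\<lambda>p. z p * cnj (w p)"] by simp

lemma bounded_op_swap_coords: "bounded_op (\<lambda>z :: 'a \<times> 'b \<Rightarrow> complex. swap_coords z)"
proof (rule bounded_opI[where C=1])
  fix x :: "'a \<times> 'b \<Rightarrow> complex" assume "is_l2 x"
  thus "is_l2 (swap_coords x)" by (simp add: is_l2_swap_coords)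
  show "l2_norm (swap_coords x) \<le> 1 * l2_norm x" by (simp add: l2_norm_def l2_normsq_swap_coords)
next
  fix x y :: "'a \<times> 'b \<Rightarrow> complex" and a b
  show "swap_coords (\<lambda>i. a * x i + b * y i) = (\<lambda>i. a * swap_coords x i + b * swap_coords y i)"
    by (simp add: swap_coords_def)
qed

lemma tensor_seq_eq_sum: "tensor_seq r f1 f2 p = (\<lambda>q. \<Sum>k<r. tensor (f1 k (fst p)) (f2 k (snd p)) q)"
  unfolding tensor_seq_def tensor_def by (auto split: prod.splits)

lemma l2_inner_tensor_seq:
  assumes "\<forall>k<r. \<forall>n. is_l2 (f1 k n)" "\<forall>k<r. \<forall>n. is_l2 (f2 k n)" "is_l2 z"
  shows "l2_inner z (tensor_seq r f1 f2 p)
      = (\<Sum>k<r. l2_inner z (tensor (f1 k (fst p)) (f2 k (snd p))))"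
proof -
  have "l2_inner z (\<lambda>q. \<Sum>k<r. 1 * tensor (f1 k (fst p)) (f2 k (snd p)) q)
      = (\<Sum>k<r. cnj 1 * l2_inner z (tensor (f1 k (fst p)) (f2 k (snd p))))"
    by (rule l2_inner_sum_right) (use assms in \<open>auto intro!: is_l2_tensor\<close>)
  thus ?thesis unfolding tensor_seq_eq_sum by simp
qed

lemma analysis_op_tensor_seq_tensor:
  assumes l1: "\<forall>k<r. \<forall>n. is_l2 (f1 k n)" and l2: "\<forall>k<r. \<forall>n. is_l2 (f2 k n)"
    and x: "is_l2 x" and y: "is_l2 y"
  shows "analysis_op (tensor_seq r f1 f2) (tensor x y) (m, n) =
    (\<Sum>k<r. analysis_op (f1 k) x m * analysis_op (f2 k) y n)"
  unfolding analysis_op_def l2_inner_tensor_seq[OF l1 l2 is_l2_tensor[OF x y]]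
  using l2_inner_tensor_tensor[OF x y] l1 l2 by (intro sum.cong) auto

lemma bessel_bound_tensor_seq:
  assumes b1: "\<And>k. k < r \<Longrightarrow> bessel_bound (f1 k) (B1 k)"
    and b2: "\<And>k. k < r \<Longrightarrow> bessel_bound (f2 k) (B2 k)"
  shows "bessel_bound (tensor_seq r f1 f2) (real r * (\<Sum>k<r. B1 k * B2 k))"
proof -
  have "tensor_seq r f1 f2 = (\<lambda>p i. \<Sum>k<r. tensor (f1 k (fst p)) (f2 k (snd p)) i)"
    by (rule ext) (rule tensor_seq_eq_sum)
  thus ?thesis using bessel_bound_sum[OF bessel_bound_tensor[OF b1 b2]] by simp
qed

lemma tensor_seq_swap: "tensor_seq r f2 f1 (prod.swap p) = swap_coords (tensor_seq r f1 f2 p)"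
  unfolding tensor_seq_def swap_coords_def by (auto simp: mult.commute split: prod.splits)

lemma analysis_op_tensor_seq_swap: "analysis_op (tensor_seq r fb fa) z
    = swap_coords (analysis_op (tensor_seq r fa fb) (swap_coords z))"
proof
  fix p :: "nat \<times> nat"
  have "analysis_op (tensor_seq r fb fa) z p
      = l2_inner (swap_coords (swap_coords z)) (tensor_seq r fb fa (prod.swap (prod.swap p)))"
    unfolding analysis_op_def by simp
  also have "\<dots> = l2_inner (swap_coords z) (tensor_seq r fa fb (prod.swap p))"
    unfolding tensor_seq_swap l2_inner_swap_coords ..
  finally show "analysis_op (tensor_seq r fb fa) z p
      = swap_coords (analysis_op (tensor_seq r fa fb) (swap_coords z)) p"
    unfolding analysis_op_def swap_coords_def by simp
qed

lemma bessel_bound_tensor_seq_swap: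
  assumes "bessel_bound (tensor_seq r f1 f2) B"
  shows "bessel_bound (tensor_seq r f2 f1) B"
  unfolding bessel_bound_def
proof (intro conjI allI impI)
  fix p :: "nat \<times> nat"
  have "is_l2 (swap_coords (tensor_seq r f1 f2 (prod.swap p)))"
    unfolding is_l2_swap_coords by (rule bessel_bound_is_l2[OF assms])
  thus "is_l2 (tensor_seq r f2 f1 p)" using tensor_seq_swap[of r f2 f1 "prod.swap p"] by simp
next
  fix z :: "nat \<times> nat \<Rightarrow> complex" assume z: "is_l2 z"
  hence z': "is_l2 (swap_coords z)" by (simp add: is_l2_swap_coords)
  show "is_l2 (analysis_op (tensor_seq r f2 f1) z)"
    unfolding analysis_op_tensor_seq_swap[where fa=f1 and fb=f2] is_l2_swap_coords
      by (rule is_l2_analysis_op[OF assms z'])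
  show "l2_normsq (analysis_op (tensor_seq r f2 f1) z) \<le> B * l2_normsq z"
    unfolding analysis_op_tensor_seq_swap[where fa=f1 and fb=f2] l2_normsq_swap_coords
      using l2_normsq_analysis_op_le[OF assms z'] by (simp add: l2_normsq_swap_coords)
qed

lemma frame_on_tensor_seq_swap:
  assumes "frame_on UNIV (tensor_seq r f1 f2)"
  shows "frame_on UNIV (tensor_seq r f2 f1)"
proof -
  obtain B A where b: "bessel_bound (tensor_seq r f1 f2) B" and A: "A > 0"
    and lb: "\<And>x. is_l2 x \<Longrightarrow> A * l2_normsq x \<le> l2_normsq (analysis_op (tensor_seq r f1 f2) x)"
    using assms unfolding frame_on_UNIV_iff by blast
  have "A * l2_normsq z \<le> l2_normsq (analysis_op (tensor_seq r f2 f1) z)" if "is_l2 z" for z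
    unfolding analysis_op_tensor_seq_swap[where fa=f1 and fb=f2] l2_normsq_swap_coords
      using lb[of "swap_coords z"] that by (simp add: is_l2_swap_coords l2_normsq_swap_coords)
  thus ?thesis unfolding frame_on_UNIV_iff using bessel_bound_tensor_seq_swap[OF b] A by blast
qed

lemma tensor_seq_right_inverse_swap:
  assumes V: "bounded_op V" "\<And>c. is_l2 c \<Longrightarrow> analysis_op (tensor_seq r f1 f2) (V c) = c"
  shows "\<exists>V'. bounded_op V' \<and> (\<forall>c. is_l2 c \<longrightarrow> analysis_op (tensor_seq r f2 f1) (V' c) = c)"
proof (intro exI conjI allI impI)
  show "bounded_op (\<lambda>c. swap_coords (V (swap_coords c)))"
    by (rule bounded_op_comp[OF bounded_op_swap_coords bounded_op_comp[OF V(1) bounded_op_swap_coords]])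
  fix c :: "nat \<times> nat \<Rightarrow> complex" assume c: "is_l2 c"
  show "analysis_op (tensor_seq r f2 f1) (swap_coords (V (swap_coords c))) = c"
  proof -
    have c': "is_l2 (swap_coords c)" by (simp add: is_l2_swap_coords c)
    show ?thesis
      unfolding analysis_op_tensor_seq_swap[where fa=f1 and fb=f2] swap_coords_swap_coords
        V(2)[OF c'] by simp
  qed
qed

section \<open>Spanning sets of coefficient vectors\<close>

definition seq_subspace :: "('k \<Rightarrow> complex) set \<Rightarrow> bool" where
  "seq_subspace W \<longleftrightarrow> (\<lambda>k. 0) \<in> W \<and> (\<forall>c\<in>W. \<forall>d\<in>W. \<forall>\<alpha> \<beta>. (\<lambda>k. \<alpha> * c k + \<beta> * d k) \<in> W)"

lemma seq_subspaceD:
  "seq_subspace W \<Longrightarrow> c \<in> W \<Longrightarrow> d \<in> W \<Longrightarrow> (\<lambda>k. \<alpha> * c k + \<beta> * d k) \<in> W"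
  unfolding seq_subspace_def by blast

lemma seq_subspace_sum:
  fixes n :: nat
  assumes W: "seq_subspace W" and w: "\<And>j. j < n \<Longrightarrow> w j \<in> W"
  shows "(\<lambda>k. \<Sum>j<n. a j * w j k) \<in> W"
  using w
proof (induction n)
  case 0 thus ?case using W unfolding seq_subspace_def by simp
next
  case (Suc n)
  have "(\<lambda>k. 1 * (\<Sum>j<n. a j * w j k) + a n * w n k) \<in> W"
    by (rule seq_subspaceD[OF W]) (use Suc in auto)
  thus ?case by simp
qed

lemma annihilator_trivial_eliminate_last:
  fixes r :: nat and v0 c' :: "nat \<Rightarrow> complex"
  assumes ann: "\<And>c. (\<And>v. v \<in> V \<Longrightarrow> (\<Sum>k<Suc r. c k * v k) = 0) \<Longrightarrow> \<forall>k<Suc r. c k = 0"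
    and v0: "v0 r \<noteq> 0"
    and ann': "\<And>w. w \<in> V \<Longrightarrow> (\<Sum>k<r. c' k * (w k - (w r / v0 r) * v0 k)) = 0"
  shows "\<forall>k<r. c' k = 0"
proof -
  define c where "c = c'(r := - (\<Sum>k<r. c' k * v0 k) / v0 r)"
  have c0: "\<forall>k<Suc r. c k = 0"
  proof (rule ann)
    fix w assume w: "w \<in> V"
    have "(\<Sum>k<r. c' k * w k) = (w r / v0 r) * (\<Sum>k<r. c' k * v0 k)"
      using ann'[OF w] by (simp add: algebra_simps sum_subtractf sum_distrib_left)
    moreover have "(\<Sum>k<r. c k * w k) = (\<Sum>k<r. c' k * w k)"
      by (rule sum.cong) (auto simp: c_def)
    ultimately show "(\<Sum>k<Suc r. c k * w k) = 0"
      unfolding c_def using v0 by (simp add: field_simps)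
  qed
  have "c k = c' k" if "k < r" for k using that unfolding c_def by simp
  thus ?thesis using c0 by simp
qed

lemma seq_subspace_fun_upd_zero:
  assumes W: "seq_subspace W"
  shows "seq_subspace {u. u(r := 0) \<in> W}"
  unfolding seq_subspace_def
proof (intro conjI ballI allI)
  show "(\<lambda>k. 0) \<in> {u. u(r := 0) \<in> W}" using W unfolding seq_subspace_def by (simp add: fun_upd_idem)
  fix c d \<alpha> \<beta> assume "c \<in> {u. u(r := 0) \<in> W}" "d \<in> {u. u(r := 0) \<in> W}"
  hence "c(r := 0) \<in> W" "d(r := 0) \<in> W" by auto
  hence "(\<lambda>k. \<alpha> * (c(r := 0)) k + \<beta> * (d(r := 0)) k) \<in> W" by (rule seq_subspaceD[OF W])
  moreover have "(\<lambda>k. \<alpha> * c k + \<beta> * d k)(r := 0) = (\<lambda>k. \<alpha> * (c(r := 0)) k + \<beta> * (d(r := 0)) k)"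
    by auto
  ultimately show "(\<lambda>k. \<alpha> * c k + \<beta> * d k) \<in> {u. u(r := 0) \<in> W}" by simp
qed

lemma unit_vec_mem_from_pivot:
  fixes W :: "(nat \<Rightarrow> complex) set"
  assumes W: "seq_subspace W"
    and local: "\<And>w u. w \<in> W \<Longrightarrow> (\<And>k. k < Suc r \<Longrightarrow> u k = w k) \<Longrightarrow> u \<in> W"
    and v0: "v0 \<in> W" "v0 r \<noteq> 0" and units: "\<And>j. j < r \<Longrightarrow> unit_vec j \<in> W"
  shows "unit_vec r \<in> W"
proof (rule local)
  have "(\<lambda>k. \<Sum>j<r. v0 j * unit_vec j k) \<in> W"
    by (rule seq_subspace_sum[OF W units])
  thus "(\<lambda>k. (1 / v0 r) * v0 k + (- 1 / v0 r) * (\<Sum>j<r. v0 j * unit_vec j k)) \<in> W"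
    using v0 by (intro seq_subspaceD[OF W]) auto
  fix k assume "k < Suc r"
  moreover have "(\<Sum>j<r. v0 j * unit_vec j k) = (if k < r then v0 k else 0)"
    unfolding unit_vec_def by (simp add: if_distrib sum.If_cases cong: if_cong)
  ultimately show "unit_vec r k = (1 / v0 r) * v0 k + (- 1 / v0 r) * (\<Sum>j<r. v0 j * unit_vec j k)"
    using v0(2) unfolding unit_vec_def by (auto simp: field_simps less_Suc_eq)
qed

lemma annihilator_trivial_pivot:
  fixes r :: nat and V :: "(nat \<Rightarrow> complex) set"
  assumes ann: "\<And>c. (\<And>v. v \<in> V \<Longrightarrow> (\<Sum>k<Suc r. c k * v k) = 0) \<Longrightarrow> \<forall>k<Suc r. c k = 0"
  shows "\<exists>v0\<in>V. v0 r \<noteq> 0"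
proof (rule ccontr)
  assume "\<not> (\<exists>v0\<in>V. v0 r \<noteq> 0)"
  hence "(\<Sum>k<Suc r. unit_vec r k * v k) = 0" if "v \<in> V" for v
    using that unfolding unit_vec_def by (auto simp: if_distrib sum.If_cases cong: if_cong)
  hence "\<forall>k<Suc r. unit_vec r k = 0" by (rule ann)
  thus False unfolding unit_vec_def by auto
qed

lemma seq_subspace_eliminate:
  assumes W: "seq_subspace W" and "w \<in> W" "v0 \<in> W" "v0 r \<noteq> 0"
  shows "(\<lambda>k. w k - (w r / v0 r) * v0 k)(r := 0) \<in> W"
proof -
  have "(\<lambda>k. 1 * w k + (- (w r / v0 r)) * v0 k) \<in> W"
    using assms by (intro seq_subspaceD[OF W]) auto
  moreover have "(\<lambda>k. w k - (w r / v0 r) * v0 k)(r := 0) = (\<lambda>k. 1 * w k + (- (w r / v0 r)) * v0 k)"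
    using assms(4) by auto
  ultimately show ?thesis by simp
qed

lemma unit_vec_mem_if_annihilator_trivial:
  fixes W V :: "(nat \<Rightarrow> complex) set"
  assumes "seq_subspace W"
    and "\<And>w u. w \<in> W \<Longrightarrow> (\<And>k. k < r \<Longrightarrow> u k = w k) \<Longrightarrow> u \<in> W"
    and "V \<subseteq> W"
    and "\<And>c. (\<And>v. v \<in> V \<Longrightarrow> (\<Sum>k<r. c k * v k) = 0) \<Longrightarrow> \<forall>k<r. c k = 0"
  shows "\<forall>k<r. unit_vec k \<in> W"
  using assms
proof (induction r arbitrary: W V)
  case 0 thus ?case by simp
next
  case (Suc r W V)
  have "\<exists>v0\<in>V. v0 r \<noteq> 0" by (rule annihilator_trivial_pivot[OF Suc.prems(4)])
  then obtain v0 where v0: "v0 \<in> V" "v0 r \<noteq> 0" by blast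
  \<comment> \<open>Eliminate coordinate \<open>r\<close> with the pivot \<open>v0\<close> and apply the induction hypothesis.\<close>
  define W' where "W' = {u. u(r := 0) \<in> W}"
  define V' where "V' = (\<lambda>w k. w k - (w r / v0 r) * v0 k) ` V"
  have "\<forall>k<r. unit_vec k \<in> W'"
  proof (rule Suc.IH)
    show "seq_subspace W'" unfolding W'_def by (rule seq_subspace_fun_upd_zero[OF Suc.prems(1)])
    show "u \<in> W'" if w: "w \<in> W'" and uw: "\<And>k. k < r \<Longrightarrow> u k = w k" for w u
    proof -
      have "u(r := 0) \<in> W"
      proof (rule Suc.prems(2)[of "w(r := 0)"])
        show "w(r := 0) \<in> W" using w unfolding W'_def by simp
        show "(u(r := 0)) k = (w(r := 0)) k" if "k < Suc r" for k
          using that uw by (auto simp: less_Suc_eq)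
      qed
      thus ?thesis unfolding W'_def by simp
    qed
    show "V' \<subseteq> W'"
    proof
      fix e assume "e \<in> V'"
      then obtain w where "w \<in> V" "e = (\<lambda>k. w k - (w r / v0 r) * v0 k)" unfolding V'_def by blast
      thus "e \<in> W'"
        unfolding W'_def using seq_subspace_eliminate[of W w v0 r] Suc.prems(1,3) v0 by auto
    qed
  next
    fix c' assume "\<And>e. e \<in> V' \<Longrightarrow> (\<Sum>k<r. c' k * e k) = 0"
    thus "\<forall>k<r. c' k = 0"
      using annihilator_trivial_eliminate_last[of V r v0 c', OF Suc.prems(4) v0(2)]
      unfolding V'_def by blast
  qed
  have units: "unit_vec k \<in> W" if "k < r" for k
  proof -
    have eq: "(unit_vec k)(r := 0) = unit_vec k" using that unfolding unit_vec_def by auto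
    have "(unit_vec k)(r := 0) \<in> W" using \<open>\<forall>k<r. unit_vec k \<in> W'\<close> that unfolding W'_def by blast
    thus ?thesis unfolding eq .
  qed
  have v0W: "v0 \<in> W" using v0(1) Suc.prems(3) by blast
  have "unit_vec r \<in> W" by (rule unit_vec_mem_from_pivot[OF Suc.prems(1,2) v0W v0(2) units])
  thus ?case using units less_Suc_eq by auto
qed

lemma seq_subspace_bessel_combinations:
  fixes r :: nat
  shows "seq_subspace {c. \<exists>B. bessel_bound (\<lambda>n i. \<Sum>k<r. c k * g k n i) B}"
  unfolding seq_subspace_def
proof (intro conjI ballI allI)
  show "(\<lambda>k. 0) \<in> {c. \<exists>B. bessel_bound (\<lambda>n i. \<Sum>k<r. c k * g k n i) B}"
    using bessel_bound_zero by auto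
  fix c d \<alpha> \<beta>
  assume "c \<in> {c. \<exists>B. bessel_bound (\<lambda>n i. \<Sum>k<r. c k * g k n i) B}"
    and "d \<in> {c. \<exists>B. bessel_bound (\<lambda>n i. \<Sum>k<r. c k * g k n i) B}"
  then obtain B1 B2 where "bessel_bound (\<lambda>n i. \<Sum>k<r. c k * g k n i) B1"
    and "bessel_bound (\<lambda>n i. \<Sum>k<r. d k * g k n i) B2" by blast
  from bessel_bound_lin_comb[OF this, of \<alpha> \<beta>]
  show "(\<lambda>k. \<alpha> * c k + \<beta> * d k) \<in> {c. \<exists>B. bessel_bound (\<lambda>n i. \<Sum>k<r. c k * g k n i) B}"
    by (auto simp: algebra_simps sum.distrib sum_distrib_left)
qed

lemma lin_indep_seqs_annihilator:
  assumes l2: "\<forall>k<r. \<forall>n. is_l2 (f k n)" and indep: "lin_indep_seqs r f"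
    and ann: "\<And>x m. is_l2 x \<Longrightarrow> (\<Sum>k<r. c k * cnj (l2_inner x (f k m))) = 0"
  shows "\<forall>k<r. c k = 0"
proof -
  have "(\<lambda>i. \<Sum>k<r. c k * f k m i) = (\<lambda>i. 0)" for m
  proof -
    define p where "p = (\<lambda>i. \<Sum>k<r. c k * f k m i)"
    have p: "is_l2 p" unfolding p_def using l2 by (intro is_l2_sum is_l2_scale) auto
    have "l2_inner p p = (\<Sum>k<r. cnj (c k) * l2_inner p (f k m))"
      unfolding p_def[of] by (rule l2_inner_sum_right) (use l2 p[unfolded p_def] in auto)
    hence "cnj (l2_inner p p) = (\<Sum>k<r. c k * cnj (l2_inner p (f k m)))"
      by (simp add: cnj_sum)
    hence "l2_normsq p = 0" using ann[OF p] by (simp add: l2_inner_self)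
    thus ?thesis using l2_normsq_eq_0D[OF p] unfolding p_def by blast
  qed
  thus ?thesis using indep unfolding lin_indep_seqs_def by meson
qed

section \<open>Bessel sequences: part (i)\<close>

lemma bessel_bound_tensor_seq_slice:
  assumes l1: "\<forall>k<r. \<forall>n. is_l2 (f1 k n)" and l2: "\<forall>k<r. \<forall>n. is_l2 (f2 k n)"
    and F: "bessel_bound (tensor_seq r f1 f2) B" and x: "is_l2 x"
  shows "bessel_bound (\<lambda>n i. \<Sum>k<r. cnj (l2_inner x (f1 k m)) * f2 k n i) (B * l2_normsq x)"
  unfolding bessel_bound_def
proof (intro conjI allI impI)
  let ?g = "\<lambda>n i. \<Sum>k<r. cnj (l2_inner x (f1 k m)) * f2 k n i"
  show "is_l2 (?g n)" for n
    using l2 by (intro is_l2_sum is_l2_scale) auto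
  fix y :: "nat \<Rightarrow> complex" assume y: "is_l2 y"
  have xy: "is_l2 (tensor x y)" by (rule is_l2_tensor[OF x y])
  have row: "analysis_op ?g y n = analysis_op (tensor_seq r f1 f2) (tensor x y) (m, n)" for n
    using analysis_op_tensor_seq_tensor[OF l1 l2 x y, of m n]
      l2_inner_sum_right[of "{..<r}" "\<lambda>k. f2 k n" y "\<lambda>k. cnj (l2_inner x (f1 k m))"] l2 y
    unfolding analysis_op_def by simp
  define Q where "Q = (\<lambda>p. (cmod (analysis_op (tensor_seq r f1 f2) (tensor x y) p))^2)"
  have "Q summable_on UNIV" using is_l2_analysis_op[OF F xy] unfolding Q_def is_l2_def .
  note Q = summable_on_pairD[OF this]
  show "is_l2 (analysis_op ?g y)" unfolding is_l2_def row using Q unfolding Q_def by simp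
  have "l2_normsq (analysis_op ?g y) = sum (\<lambda>m. infsum (\<lambda>n. Q (m, n)) UNIV) {m}"
    unfolding l2_normsq_def row Q_def by simp
  also have "\<dots> \<le> infsum (\<lambda>m. infsum (\<lambda>n. Q (m, n)) UNIV) UNIV"
    using Q by (intro finite_sum_le_infsum) (auto intro: infsum_nonneg simp: Q_def)
  also have "\<dots> = l2_normsq (analysis_op (tensor_seq r f1 f2) (tensor x y))"
    using Q unfolding Q_def l2_normsq_def by simp
  also have "\<dots> \<le> B * l2_normsq (tensor x y)" by (rule l2_normsq_analysis_op_le[OF F xy])
  finally show "l2_normsq (analysis_op ?g y) \<le> B * l2_normsq x * l2_normsq y"
    using tensor_l2[OF x y] by (simp add: mult.assoc)
qed

lemma tensor_seq_bessel_imp_bessel_right: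
  assumes l1: "\<forall>k<r. \<forall>n. is_l2 (f1 k n)" and l2: "\<forall>k<r. \<forall>n. is_l2 (f2 k n)"
    and indep1: "lin_indep_seqs r f1" and F: "bessel_bound (tensor_seq r f1 f2) B"
  shows "\<forall>k<r. \<exists>B'. bessel_bound (f2 k) B'"
proof -
  define W where "W = {c. \<exists>B. bessel_bound (\<lambda>n i. \<Sum>k<r. c k * f2 k n i) B}"
  define V where "V = {v. \<exists>x m. is_l2 x \<and> v = (\<lambda>k. cnj (l2_inner x (f1 k m)))}"
  have "\<forall>k<r. unit_vec k \<in> W"
  proof (rule unit_vec_mem_if_annihilator_trivial)
    show "seq_subspace W" unfolding W_def by (rule seq_subspace_bessel_combinations)
    show "u \<in> W" if "w \<in> W" "\<And>k. k < r \<Longrightarrow> u k = w k" for w u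
    proof -
      have "(\<lambda>n i. \<Sum>k<r. u k * f2 k n i) = (\<lambda>n i. \<Sum>k<r. w k * f2 k n i)"
        using that(2) by (auto intro!: sum.cong)
      thus ?thesis using that(1) unfolding W_def by simp
    qed
    show "V \<subseteq> W"
      unfolding V_def W_def using bessel_bound_tensor_seq_slice[OF l1 l2 F] by blast
    show "\<forall>k<r. c k = 0" if "\<And>v. v \<in> V \<Longrightarrow> (\<Sum>k<r. c k * v k) = 0" for c
      by (rule lin_indep_seqs_annihilator[OF l1 indep1]) (use that in \<open>auto simp: V_def\<close>)
  qed
  moreover have "(\<lambda>n i. \<Sum>k'<r. unit_vec k k' * f2 k' n i) = f2 k" if "k < r" for k
    using that by (simp add: unit_vec_def if_distrib[of "\<lambda>a. a * _"] sum.If_cases cong: if_cong)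
  ultimately show ?thesis unfolding W_def by auto
qed

theorem tensor_seq_bessel_iff:
  assumes l1: "\<forall>k<r. \<forall>n. is_l2 (f1 k n)" and l2: "\<forall>k<r. \<forall>n. is_l2 (f2 k n)"
    and indep1: "lin_indep_seqs r f1" and indep2: "lin_indep_seqs r f2"
  shows "bessel_on UNIV (tensor_seq r f1 f2) \<longleftrightarrow> (\<forall>k<r. bessel_on UNIV (f1 k)
      \<and> bessel_on UNIV (f2 k))"
proof
  assume "bessel_on UNIV (tensor_seq r f1 f2)"
  then obtain B where b: "bessel_bound (tensor_seq r f1 f2) B" unfolding bessel_on_UNIV_iff by blast
  have "\<forall>k<r. \<exists>B'. bessel_bound (f2 k) B'"
    by (rule tensor_seq_bessel_imp_bessel_right[OF l1 l2 indep1 b])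
  moreover have "\<forall>k<r. \<exists>B'. bessel_bound (f1 k) B'"
    by (rule tensor_seq_bessel_imp_bessel_right[OF l2 l1 indep2 bessel_bound_tensor_seq_swap[OF b]])
  ultimately show "\<forall>k<r. bessel_on UNIV (f1 k) \<and> bessel_on UNIV (f2 k)"
    unfolding bessel_on_UNIV_iff by blast
next
  assume a: "\<forall>k<r. bessel_on UNIV (f1 k) \<and> bessel_on UNIV (f2 k)"
  define B1 where "B1 = (\<lambda>k. SOME B. bessel_bound (f1 k) B)"
  define B2 where "B2 = (\<lambda>k. SOME B. bessel_bound (f2 k) B)"
  have b1: "bessel_bound (f1 k) (B1 k)" if "k < r" for k
    unfolding B1_def using a that unfolding bessel_on_UNIV_iff by (metis someI_ex)
  have b2: "bessel_bound (f2 k) (B2 k)" if "k < r" for k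
    unfolding B2_def using a that unfolding bessel_on_UNIV_iff by (metis someI_ex)
  show "bessel_on UNIV (tensor_seq r f1 f2)"
    unfolding bessel_on_UNIV_iff using bessel_bound_tensor_seq[of r f1 B1 f2 B2] b1 b2 by blast
qed

section \<open>Frames: part (ii)\<close>

definition block_embed :: "nat \<Rightarrow> (nat \<Rightarrow> complex) \<Rightarrow> (nat \<times> nat \<Rightarrow> complex)" where
  "block_embed k c = (\<lambda>p. if fst p = k then c (snd p) else 0)"

lemma block_embed_l2:
  assumes c: "is_l2 c"
  shows "is_l2 (block_embed k c) \<and> l2_normsq (block_embed k c) = l2_normsq c"
proof -
  let ?Q = "\<lambda>p. (cmod (block_embed k c p))^2"
  have inner: "infsum (\<lambda>m. ?Q (k', m)) UNIV = (if k' = k then l2_normsq c else 0)" for k'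
    unfolding block_embed_def l2_normsq_def by simp
  have F: "?Q summable_on UNIV \<and> infsum ?Q UNIV = infsum (\<lambda>k'. infsum (\<lambda>m. ?Q (k', m)) UNIV) UNIV"
  proof (rule nonneg_infsum_pair)
    show "(\<lambda>m. ?Q (k', m)) summable_on UNIV" for k'
      using c unfolding block_embed_def is_l2_def by (cases "k' = k") auto
    show "(\<lambda>k'. infsum (\<lambda>m. ?Q (k', m)) UNIV) summable_on UNIV"
      unfolding inner
      by (rule summable_on_cong_neutral[where S="{k}" and f="\<lambda>_. l2_normsq c", THEN iffD1]) auto
  qed simp
  have "infsum (\<lambda>k'. infsum (\<lambda>m. ?Q (k', m)) UNIV) UNIV = l2_normsq c"
    unfolding inner by (subst infsum_cong_neutral[where T="{k}" and g="\<lambda>_. l2_normsq c"]) auto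
  thus ?thesis using F unfolding is_l2_def l2_normsq_def[of "block_embed k c"] by simp
qed

lemma bounded_op_block_embed: "bounded_op (block_embed k)"
proof (rule bounded_opI[where C=1])
  fix x :: "nat \<Rightarrow> complex" assume x: "is_l2 x"
  show "is_l2 (block_embed k x)" using block_embed_l2[OF x] by blast
  show "l2_norm (block_embed k x) \<le> 1 * l2_norm x" unfolding l2_norm_def using block_embed_l2[OF x]
    by simp
next
  fix x y :: "nat \<Rightarrow> complex" and a b
  show "block_embed k (\<lambda>i. a * x i + b * y i) = (\<lambda>i. a * block_embed k x i + b * block_embed k y i)"
    unfolding block_embed_def by auto
qed

definition concat_seq :: "nat \<Rightarrow> (nat \<Rightarrow> nat \<Rightarrow> 'i \<Rightarrow> complex) \<Rightarrow> nat \<times> nat \<Rightarrow> 'i \<Rightarrow> complex" where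
  "concat_seq r f = (\<lambda>(k, m). if k < r then f k m else (\<lambda>i. 0))"

lemma analysis_op_concat_seq:
  "analysis_op (concat_seq r f) x (k, m) = (if k < r then analysis_op (f k) x m else 0)"
  unfolding concat_seq_def analysis_op_def by simp

lemma l2_normsq_analysis_op_concat_seq:
  assumes b: "\<And>k. k < r \<Longrightarrow> bessel_bound (f k) (B k)" and x: "is_l2 x"
  shows "is_l2 (analysis_op (concat_seq r f) x)"
    and "l2_normsq (analysis_op (concat_seq r f) x) = (\<Sum>k<r. l2_normsq (analysis_op (f k) x))"
proof -
  let ?Q = "\<lambda>p. (cmod (analysis_op (concat_seq r f) x p))^2"
  have rows: "infsum (\<lambda>m. ?Q (k, m)) UNIV
      = (if k < r then l2_normsq (analysis_op (f k) x) else 0)" for k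
    unfolding analysis_op_concat_seq l2_normsq_def by simp
  have finite_rows: "(\<lambda>k. infsum (\<lambda>m. ?Q (k, m)) UNIV) summable_on UNIV"
    "infsum (\<lambda>k. infsum (\<lambda>m. ?Q (k, m)) UNIV) UNIV = (\<Sum>k<r. l2_normsq (analysis_op (f k) x))"
    unfolding rows using infsum_if_less[of r "\<lambda>k. l2_normsq (analysis_op (f k) x)"] by blast+
  have "?Q summable_on UNIV \<and> infsum ?Q UNIV = infsum (\<lambda>k. infsum (\<lambda>m. ?Q (k, m)) UNIV) UNIV"
  proof (rule nonneg_infsum_pair[OF _ _ finite_rows(1)])
    show "(\<lambda>m. ?Q (k, m)) summable_on UNIV" for k
      using is_l2_analysis_op[OF b x, of k] unfolding analysis_op_concat_seq is_l2_def
        by (cases "k < r") auto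
  qed simp
  thus "is_l2 (analysis_op (concat_seq r f) x)"
    and "l2_normsq (analysis_op (concat_seq r f) x) = (\<Sum>k<r. l2_normsq (analysis_op (f k) x))"
    unfolding is_l2_def l2_normsq_def[of "analysis_op _ x"] finite_rows(2) by simp_all
qed

lemma bessel_bound_concat_seq:
  assumes b: "\<And>k. k < r \<Longrightarrow> bessel_bound (f k) (B k)"
  shows "bessel_bound (concat_seq r f) (\<Sum>k<r. B k)"
  unfolding bessel_bound_def
proof (intro conjI allI impI)
  show "is_l2 (concat_seq r f p)" for p
    unfolding concat_seq_def using b by (auto intro: bessel_bound_is_l2 split: prod.splits)
  fix x :: "'a \<Rightarrow> complex" assume x: "is_l2 x"
  show "is_l2 (analysis_op (concat_seq r f) x)"
    by (rule l2_normsq_analysis_op_concat_seq(1)[of r f B x, OF b x])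
  have "l2_normsq (analysis_op (concat_seq r f) x) = (\<Sum>k<r. l2_normsq (analysis_op (f k) x))"
    by (rule l2_normsq_analysis_op_concat_seq(2)[of r f B x, OF b x])
  also have "\<dots> \<le> (\<Sum>k<r. B k * l2_normsq x)"
    by (rule sum_mono) (simp add: l2_normsq_analysis_op_le[OF b x])
  also have "\<dots> = (\<Sum>k<r. B k) * l2_normsq x" by (rule sum_distrib_right[symmetric])
  finally show "l2_normsq (analysis_op (concat_seq r f) x) \<le> (\<Sum>k<r. B k) * l2_normsq x" .
qed

lemma frame_on_concat_seq:
  assumes "bessel_bound (concat_seq r f) B" and "A > 0"
    and "\<And>x. is_l2 x \<Longrightarrow> A * l2_normsq x \<le> l2_normsq (analysis_op (concat_seq r f) x)"
  shows "frame_on {(k, m). k < r} (\<lambda>(k, m). f k m)"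
proof -
  have "frame_on UNIV (concat_seq r f)" unfolding frame_on_UNIV_iff using assms by blast
  moreover have "(\<lambda>p. (cmod (l2_inner x (concat_seq r f p)))^2) summable_on UNIV \<longleftrightarrow>
      (\<lambda>p. (cmod (l2_inner x ((\<lambda>(k, m). f k m) p)))^2) summable_on {(k, m). k < r}"
    and "infsum (\<lambda>p. (cmod (l2_inner x (concat_seq r f p)))^2) UNIV =
      infsum (\<lambda>p. (cmod (l2_inner x ((\<lambda>(k, m). f k m) p)))^2) {(k, m). k < r}" for x
    by (rule summable_on_cong_neutral infsum_cong_neutral; auto simp: concat_seq_def)+
  moreover have "(\<forall>p\<in>UNIV. is_l2 (concat_seq r f p))
      \<longleftrightarrow> (\<forall>p\<in>{(k, m). k < r}. is_l2 ((\<lambda>(k, m). f k m) p))"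
    by (auto simp: concat_seq_def)
  ultimately show ?thesis unfolding frame_on_def bessel_on_def by simp
qed

lemma sum_block_embed_analysis_op:
  assumes "\<And>k. k < r \<Longrightarrow> bessel_bound (f k) (B k)" and "is_l2 x"
  shows "(\<lambda>p. \<Sum>k<r. block_embed k (analysis_op (f k) x) p) = analysis_op (concat_seq r f) x"
  unfolding block_embed_def analysis_op_concat_seq
  by (auto simp: analysis_op_concat_seq if_distrib sum.If_cases cong: if_cong)

lemma analysis_op_tensor_seq_tensor_unit_vec_le:
  assumes l1: "\<forall>k<r. \<forall>n. is_l2 (f1 k n)" and l2: "\<forall>k<r. \<forall>n. is_l2 (f2 k n)"
    and b1: "\<And>k. k < r \<Longrightarrow> bessel_bound (f1 k) (B1 k)"
    and b2: "\<And>k. k < r \<Longrightarrow> bessel_bound (f2 k) (B2 k)" and x: "is_l2 x"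
  shows "l2_normsq (analysis_op (tensor_seq r f1 f2) (tensor x (unit_vec 0)))
    \<le> real r * (\<Sum>k<r. B2 k) * l2_normsq (analysis_op (concat_seq r f1) x)"
proof -
  define e0 where "e0 = (unit_vec 0 :: nat \<Rightarrow> complex)"
  define t where "t = (\<lambda>k. tensor (analysis_op (f1 k) x) (analysis_op (f2 k) e0))"
  have t: "is_l2 (t k)" "l2_normsq (t k) \<le> l2_normsq (analysis_op (f1 k) x) * (\<Sum>k<r. B2 k)"
    if "k < r" for k
  proof -
    have "B2 k \<le> (\<Sum>k<r. B2 k)"
      using that bessel_bound_nonneg[OF b2] by (intro member_le_sum) auto
    hence "l2_normsq (analysis_op (f2 k) e0) \<le> (\<Sum>k<r. B2 k)"
      using l2_normsq_analysis_op_le[OF b2[OF that], of e0] unfolding e0_def by simp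
    thus "is_l2 (t k)" "l2_normsq (t k) \<le> l2_normsq (analysis_op (f1 k) x) * (\<Sum>k<r. B2 k)"
      using tensor_l2[OF is_l2_analysis_op[OF b1[OF that] x] is_l2_analysis_op[OF b2[OF that]], of e0]
      unfolding t_def e0_def by (auto intro: mult_left_mono l2_normsq_nonneg)
  qed
  have "analysis_op (tensor_seq r f1 f2) (tensor x e0) (m, n) = (\<Sum>k<r. t k (m, n))" for m n
    using analysis_op_tensor_seq_tensor[OF l1 l2 x is_l2_unit_vec[of 0], of m n]
    unfolding t_def e0_def by (simp add: tensor_def)
  hence "analysis_op (tensor_seq r f1 f2) (tensor x e0) = (\<lambda>p. \<Sum>k<r. t k p)"
    by (auto simp: fun_eq_iff)
  hence "l2_normsq (analysis_op (tensor_seq r f1 f2) (tensor x e0))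
      \<le> real r * (\<Sum>k<r. l2_normsq (t k))"
    using l2_normsq_sum_le[OF t(1)] by simp
  also have "\<dots> \<le> real r * (\<Sum>k<r. l2_normsq (analysis_op (f1 k) x) * (\<Sum>k<r. B2 k))"
    using t(2) by (intro mult_left_mono sum_mono) auto
  also have "\<dots> = real r * (\<Sum>k<r. B2 k) * l2_normsq (analysis_op (concat_seq r f1) x)"
    using l2_normsq_analysis_op_concat_seq(2)[OF b1 x] unfolding sum_distrib_right[symmetric]
    by (simp add: mult.commute)
  finally show ?thesis unfolding e0_def .
qed

lemma tensor_seq_frame_imp_concat_lower_bound:
  assumes l1: "\<forall>k<r. \<forall>n. is_l2 (f1 k n)" and l2: "\<forall>k<r. \<forall>n. is_l2 (f2 k n)"
    and b1: "\<And>k. k < r \<Longrightarrow> bessel_bound (f1 k) (B1 k)"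
    and b2: "\<And>k. k < r \<Longrightarrow> bessel_bound (f2 k) (B2 k)"
    and A: "A > 0" and lb: "\<And>z. is_l2 z \<Longrightarrow> A * l2_normsq z
        \<le> l2_normsq (analysis_op (tensor_seq r f1 f2) z)"
  shows "\<exists>A'>0. \<forall>x. is_l2 x \<longrightarrow> A' * l2_normsq x \<le> l2_normsq (analysis_op (concat_seq r f1) x)"
proof -
  define C where "C = real r * (1 + (\<Sum>k<r. B2 k))"
  have B2: "0 \<le> (\<Sum>k<r. B2 k)" using bessel_bound_nonneg[OF b2] by (intro sum_nonneg) auto
  have key: "A * l2_normsq x \<le> C
      * l2_normsq (analysis_op (concat_seq r f1) x)" if x: "is_l2 x" for x
  proof -
    have "A * l2_normsq x = A * l2_normsq (tensor x (unit_vec (0::nat)))"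
      using tensor_l2[OF x is_l2_unit_vec[of "0::nat"]] by simp
    also have "\<dots> \<le> l2_normsq (analysis_op (tensor_seq r f1 f2) (tensor x (unit_vec 0)))"
      by (rule lb[OF is_l2_tensor[OF x is_l2_unit_vec]])
    also have "\<dots> \<le> real r * (\<Sum>k<r. B2 k) * l2_normsq (analysis_op (concat_seq r f1) x)"
      by (rule analysis_op_tensor_seq_tensor_unit_vec_le[OF l1 l2 b1 b2 x])
    also have "\<dots> \<le> C * l2_normsq (analysis_op (concat_seq r f1) x)"
      unfolding C_def by (intro mult_right_mono mult_left_mono l2_normsq_nonneg) auto
    finally show ?thesis .
  qed
  have "r > 0"
    using key[OF is_l2_unit_vec] A by (cases r) (auto simp: C_def)
  hence C: "C > 0" unfolding C_def using B2 by simp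
  show ?thesis
    using key A C by (intro exI[of _ "A / C"]) (auto simp: field_simps)
qed

lemma tensor_seq_frame_left_inverse_property:
  assumes l1: "\<forall>k<r. \<forall>n. is_l2 (f1 k n)" and l2: "\<forall>k<r. \<forall>n. is_l2 (f2 k n)"
    and F: "frame_on UNIV (tensor_seq r f1 f2)"
    and bessel: "\<forall>k<r. bessel_on UNIV (f1 k) \<and> bessel_on UNIV (f2 k)"
  shows "left_inverse_property r f1"
proof -
  obtain B1 B2 where b1: "\<And>k. k < r \<Longrightarrow> bessel_bound (f1 k) (B1 k)"
    and b2: "\<And>k. k < r \<Longrightarrow> bessel_bound (f2 k) (B2 k)"
    using bessel unfolding bessel_on_UNIV_iff by metis
  obtain A where A: "A > 0" and lb: "\<And>z. is_l2 z \<Longrightarrow> A * l2_normsq z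
      \<le> l2_normsq (analysis_op (tensor_seq r f1 f2) z)"
    using F unfolding frame_on_UNIV_iff by blast
  obtain A' where A': "A' > 0" and lb': "\<And>x. is_l2 x \<Longrightarrow> A' * l2_normsq x
      \<le> l2_normsq (analysis_op (concat_seq r f1) x)"
    using tensor_seq_frame_imp_concat_lower_bound[OF l1 l2 b1 b2 A lb] by blast
  have G: "bessel_bound (concat_seq r f1) (\<Sum>k<r. B1 k)"
    using bessel_bound_concat_seq b1 by blast
  obtain L where L: "bounded_op L" "\<And>x. is_l2 x \<Longrightarrow> L (analysis_op (concat_seq r f1) x) = x"
    using frame_analysis_op_left_inverse[OF G A' lb'] by blast
  have "(\<lambda>i. \<Sum>k<r. L (block_embed k (assoc_op (f1 k) x)) i) = x" if x: "is_l2 x" for x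
  proof -
    have "(\<lambda>i. \<Sum>k<r. L (block_embed k (analysis_op (f1 k) x)) i) =
        L (\<lambda>p. \<Sum>k<r. block_embed k (analysis_op (f1 k) x) p)"
      using block_embed_l2[OF is_l2_analysis_op[OF b1 x]]
        by (intro bounded_op_sum[OF L(1), symmetric]) auto
    also have "(\<lambda>p. \<Sum>k<r. block_embed k (analysis_op (f1 k) x) p) = analysis_op (concat_seq r f1) x"
      by (rule sum_block_embed_analysis_op[of r f1 B1 x, OF b1 x])
    also have "L (analysis_op (concat_seq r f1) x) = x" by (rule L(2)[OF x])
    finally show ?thesis unfolding assoc_op_eq_analysis_op .
  qed
  moreover have "bounded_op (\<lambda>c. L (block_embed k c))" for k
    by (rule bounded_op_comp[OF L(1) bounded_op_block_embed])
  ultimately have "\<exists>L'. (\<forall>k<r. bounded_op (L' k)) \<and>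
      (\<forall>x. is_l2 x \<longrightarrow> (\<lambda>i. \<Sum>k<r. L' k (assoc_op (f1 k) x) i) = x)"
    by (intro exI[of _ "\<lambda>k c. L (block_embed k c)"]) blast
  moreover have "bounded_op (assoc_op (f1 k))" if "k < r" for k
    unfolding assoc_op_eq_analysis_op by (rule bounded_op_analysis_op[OF b1[OF that]])
  moreover have "frame_on {(k, m). k < r} (\<lambda>(k, m). f1 k m)"
    by (rule frame_on_concat_seq[OF G A']) (rule lb')
  ultimately show ?thesis unfolding left_inverse_property_def by blast
qed

section \<open>Riesz bases: part (iii)\<close>

lemma tensor_seq_right_inverse_imp_right_inverse_property:
  assumes l1: "\<forall>k<r. \<forall>n. is_l2 (f1 k n)" and l2: "\<forall>k<r. \<forall>n. is_l2 (f2 k n)"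
    and V: "bounded_op V" and V_inv: "\<And>c. is_l2 c \<Longrightarrow> analysis_op (tensor_seq r f1 f2) (V c) = c"
  shows "right_inverse_property r f1"
  unfolding right_inverse_property_def
proof (intro exI[where x="\<lambda>k v. contract (V (tensor v (unit_vec 0))) (f2 k 0)"] conjI allI impI)
  fix k assume k: "k < r"
  show "bounded_op (\<lambda>v. contract (V (tensor v (unit_vec 0))) (f2 k 0))"
    using bounded_op_comp[OF bounded_op_contract[of "f2 k 0"] bounded_op_comp[OF V bounded_op_tensor_right[OF is_l2_unit_vec]]] l2 k
    by simp
next
  fix v :: "nat \<Rightarrow> complex" assume v: "is_l2 v"
  define z where "z = V (tensor v (unit_vec 0))"
  have ve: "is_l2 (tensor v (unit_vec 0))" by (rule is_l2_tensor[OF v is_l2_unit_vec])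
  have z: "is_l2 z" unfolding z_def by (rule bounded_op_is_l2[OF V ve])
  have "(\<Sum>k<r. assoc_op (f1 k) (contract z (f2 k 0)) m) = v m" for m
  proof -
    have "(\<Sum>k<r. assoc_op (f1 k) (contract z (f2 k 0)) m)
        = (\<Sum>k<r. l2_inner z (tensor (f1 k m) (f2 k 0)))"
      unfolding assoc_op_def using l2_inner_tensor_right[OF z] l1 l2 by (intro sum.cong) auto
    also have "\<dots> = analysis_op (tensor_seq r f1 f2) z (m, 0)"
      unfolding analysis_op_def using l2_inner_tensor_seq[OF l1 l2 z, of "(m, 0)"] by simp
    also have "\<dots> = v m" unfolding z_def V_inv[OF ve] by (simp add: tensor_def unit_vec_def)
    finally show ?thesis .
  qed
  thus "(\<lambda>i. \<Sum>k<r. assoc_op (f1 k) (contract (V (tensor v (unit_vec 0))) (f2 k 0)) i) = v"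
    unfolding z_def by blast
qed

lemma tensor_seq_riesz_right_inverse_property:
  assumes l1: "\<forall>k<r. \<forall>n. is_l2 (f1 k n)" and l2: "\<forall>k<r. \<forall>n. is_l2 (f2 k n)"
    and R: "riesz_basis_on UNIV (tensor_seq r f1 f2)"
  shows "right_inverse_property r f1 \<and> right_inverse_property r f2"
proof -
  obtain V where V: "bounded_op V" "\<And>c. is_l2 c \<Longrightarrow> analysis_op (tensor_seq r f1 f2) (V c) = c"
    using riesz_basis_analysis_op_right_inverse[OF R] by blast
  obtain V' where V': "bounded_op V'" "\<And>c. is_l2 c \<Longrightarrow> analysis_op (tensor_seq r f2 f1) (V' c) = c"
    using tensor_seq_right_inverse_swap[OF V] by blast
  show ?thesis
    using tensor_seq_right_inverse_imp_right_inverse_property[OF l1 l2 V]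
      tensor_seq_right_inverse_imp_right_inverse_property[OF l2 l1 V'] by blast
qed

theorem theorem3p2:
  fixes r :: nat
    and f1 f2 :: "nat \<Rightarrow> nat \<Rightarrow> nat \<Rightarrow> complex"
  assumes l2_1: "\<forall>k<r. \<forall>n. is_l2 (f1 k n)"
    and l2_2: "\<forall>k<r. \<forall>n. is_l2 (f2 k n)"
    and indep1: "lin_indep_seqs r f1"
    and indep2: "lin_indep_seqs r f2"
  shows "(bessel_on UNIV (tensor_seq r f1 f2) \<longleftrightarrow>
            (\<forall>k<r. bessel_on UNIV (f1 k) \<and> bessel_on UNIV (f2 k)))
       \<and> (frame_on UNIV (tensor_seq r f1 f2) \<longrightarrow>
            left_inverse_property r f1 \<and> left_inverse_property r f2)
       \<and> (riesz_basis_on UNIV (tensor_seq r f1 f2) \<longrightarrow>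
            left_inverse_property r f1 \<and> left_inverse_property r f2 \<and>
            right_inverse_property r f1 \<and> right_inverse_property r f2)"
proof -
  have bessel_iff: "bessel_on UNIV (tensor_seq r f1 f2) \<longleftrightarrow>
      (\<forall>k<r. bessel_on UNIV (f1 k) \<and> bessel_on UNIV (f2 k))"
    by (rule tensor_seq_bessel_iff[OF l2_1 l2_2 indep1 indep2])
  have frame: "left_inverse_property r f1 \<and> left_inverse_property r f2"
    if F: "frame_on UNIV (tensor_seq r f1 f2)"
  proof -
    have "\<forall>k<r. bessel_on UNIV (f1 k) \<and> bessel_on UNIV (f2 k)"
      using F bessel_iff unfolding frame_on_def by blast
    thus ?thesis
      using tensor_seq_frame_left_inverse_property[OF l2_1 l2_2 F]
        tensor_seq_frame_left_inverse_property[OF l2_2 l2_1 frame_on_tensor_seq_swap[OF F]] by blast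
  qed
  show ?thesis
    using bessel_iff frame tensor_seq_riesz_right_inverse_property[OF l2_1 l2_2]
    unfolding riesz_basis_on_def by blast
qed

end
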